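(* Let $R=\mathbb{Z}[t]/(t^3)$ and let $p$ be a prime. For complex $s_1,s_2$ with real parts sufficiently large, \[ \zeta_{R,p}(s_1,s_2)=(1-p^{-1})^{-2}\int_{\substack{(x,y,z)\in\mathbb{Z}_p^3\\ |z|^2\le|x|}} |x|^{s_1-2}\,|z|^{s_1-1}\,\max\{|x|,|y|,|z|\}^{s_2-s_1}\,dx\,dy\,dz , \] where $dx\,dy\,dz$ is the Haar measure on $\mathbb{Z}_p^3$ normalized to have total mass $1$, and $|\cdot|$ is the $p$-adic absolute value with $|p|=p^{-1}$.
   Context: Let $R=\mathbb{Z}[t]/(t^3)$, viewed as the additive group $\mathbb{Z}^3$ with basis $t^2,t,1$. A subring $S$ of $R$ means an additive subgroup of finite index that contains $1$ and is closed under multiplication. For a finite-index subgroup $S\subseteq R$ there are unique positive integers $\alpha_1(S),\alpha_2(S),\alpha_3(S)$ with $\alpha_{i+1}\mid\alpha_i$ and $R/S\cong \mathbb{Z}/\alpha_1\mathbb{Z}\oplus\mathbb{Z}/\alpha_2\mathbb{Z}\oplus\mathbb{Z}/\alpha_3\mathbb{Z}$. This tuple is called the cotype of $S$. For a subring $S$ one always has $\alpha_3(S)=1$. For a prime $p$ define \[ \zeta_{R,p}(s_1,s_2)=\sum_{S}\alpha_1(S)^{-s_1}\alpha_2(S)^{-s_2}, \] where the sum runs over all subrings $S$ of $R$ whose index $[R:S]$ is a power of $p$ (including index $1$). *)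

theory Defs
  imports "HOL-Probability.Probability"
begin

text \<open>An element (a, b, c) stands for a t^2 + b t + c.\<close>
type_synonym relt = "int \<times> int \<times> int"

definition radd :: "relt \<Rightarrow> relt \<Rightarrow> relt" where
  "radd u v = (case u of (a,b,c) \<Rightarrow> case v of (a',b',c') \<Rightarrow> (a+a', b+b', c+c'))"

definition rneg :: "relt \<Rightarrow> relt" where
  "rneg u = (case u of (a,b,c) \<Rightarrow> (-a, -b, -c))"

text \<open>(a t^2 + b t + c)(a' t^2 + b' t + c') modulo t^3.\<close>
definition rmul :: "relt \<Rightarrow> relt \<Rightarrow> relt" where
  "rmul u v = (case u of (a,b,c) \<Rightarrow> case v of (a',b',c') \<Rightarrow>
      (c*a' + b*b' + a*c', c*b' + b*c', c*c'))"

definition rone :: relt where "rone = (0, 0, 1)"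

definition additive_subgroup :: "relt set \<Rightarrow> bool" where
  "additive_subgroup S \<longleftrightarrow> (0,0,0) \<in> S \<and> (\<forall>u\<in>S. \<forall>v\<in>S. radd u v \<in> S) \<and> (\<forall>u\<in>S. rneg u \<in> S)"

definition coset :: "relt set \<Rightarrow> relt \<Rightarrow> relt set" where
  "coset S u = {radd u s | s. s \<in> S}"

definition finite_index :: "relt set \<Rightarrow> bool" where
  "finite_index S \<longleftrightarrow> finite (range (coset S))"

definition index :: "relt set \<Rightarrow> nat" where
  "index S = card (range (coset S))"

definition is_subring :: "relt set \<Rightarrow> bool" where
  "is_subring S \<longleftrightarrow> additive_subgroup S \<and> finite_index S \<and> rone \<in> S
      \<and> (\<forall>u\<in>S. \<forall>v\<in>S. rmul u v \<in> S)"

text \<open>R/S is isomorphic (as an abelian group) to Z/a1 + Z/a2 + Z/a3: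
  there is an additive map phi : Z^3 -> Z^3 inducing a bijection
  R/S -> (Z/a1 x Z/a2 x Z/a3), i.e. its kernel modulo (a1 Z x a2 Z x a3 Z) is exactly S
  and it is surjective modulo (a1 Z x a2 Z x a3 Z).\<close>
definition quotient_iso :: "relt set \<Rightarrow> nat \<Rightarrow> nat \<Rightarrow> nat \<Rightarrow> bool" where
  "quotient_iso S a1 a2 a3 \<longleftrightarrow> (\<exists>\<phi> :: relt \<Rightarrow> relt.
      (\<forall>u v. \<phi> (radd u v) = radd (\<phi> u) (\<phi> v)) \<and>
      (\<forall>u. u \<in> S \<longleftrightarrow> (case \<phi> u of (x,y,z) \<Rightarrow> int a1 dvd x \<and> int a2 dvd y \<and> int a3 dvd z)) \<and>
      (\<forall>x y z. \<exists>u. case \<phi> u of (x',y',z') \<Rightarrow>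
          int a1 dvd (x' - x) \<and> int a2 dvd (y' - y) \<and> int a3 dvd (z' - z)))"

definition is_cotype :: "relt set \<Rightarrow> nat \<times> nat \<times> nat \<Rightarrow> bool" where
  "is_cotype S a \<longleftrightarrow> (case a of (a1,a2,a3) \<Rightarrow>
      a1 > 0 \<and> a2 > 0 \<and> a3 > 0 \<and> a2 dvd a1 \<and> a3 dvd a2 \<and> quotient_iso S a1 a2 a3)"

definition cotype :: "relt set \<Rightarrow> nat \<times> nat \<times> nat" where
  "cotype S = (THE a. is_cotype S a)"

definition alpha1 :: "relt set \<Rightarrow> nat" where "alpha1 S = fst (cotype S)"
definition alpha2 :: "relt set \<Rightarrow> nat" where "alpha2 S = fst (snd (cotype S))"

definition zeta_term :: "relt set \<Rightarrow> complex \<Rightarrow> complex \<Rightarrow> complex" where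
  "zeta_term S s1 s2 = (of_nat (alpha1 S)) powr (- s1) * (of_nat (alpha2 S)) powr (- s2)"

definition p_subrings :: "nat \<Rightarrow> relt set set" where
  "p_subrings p = {S. is_subring S \<and> (\<exists>k. index S = p ^ k)}"

text \<open>An element of Z_p is represented by its p-adic digit sequence
  x = sum_i d_i p^i, d_i in {0..p-1}. The map Z_p -> {0..p-1}^N is a
  homeomorphism carrying the normalized Haar measure to the product of
  uniform probability measures on the digits.\<close>
definition Zp_haar :: "nat \<Rightarrow> (nat \<Rightarrow> nat) measure" where
  "Zp_haar p = PiM UNIV (\<lambda>_. uniform_count_measure {0..<p})"

definition padic_abs :: "nat \<Rightarrow> (nat \<Rightarrow> nat) \<Rightarrow> real" where
  "padic_abs p x = (if \<exists>i. x i \<noteq> 0 then real p powr (- real (LEAST i. x i \<noteq> 0)) else 0)"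

definition Zp3_haar :: "nat \<Rightarrow> ((nat \<Rightarrow> nat) \<times> (nat \<Rightarrow> nat) \<times> (nat \<Rightarrow> nat)) measure" where
  "Zp3_haar p = Zp_haar p \<Otimes>\<^sub>M (Zp_haar p \<Otimes>\<^sub>M Zp_haar p)"

definition integrand :: "nat \<Rightarrow> complex \<Rightarrow> complex \<Rightarrow>
    (nat \<Rightarrow> nat) \<times> (nat \<Rightarrow> nat) \<times> (nat \<Rightarrow> nat) \<Rightarrow> complex" where
  "integrand p s1 s2 w = (case w of (x,y,z) \<Rightarrow>
     if (padic_abs p z)^2 \<le> padic_abs p x then
       (of_real (padic_abs p x)) powr (s1 - 2) * (of_real (padic_abs p z)) powr (s1 - 1)
       * (of_real (max (padic_abs p x) (max (padic_abs p y) (padic_abs p z)))) powr (s2 - s1)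
     else 0)"

end

theory Submission
  imports Defs "HOL-Computational_Algebra.Primes"
begin

text \<open>
  Every subring of p-power index has a basis in Hermite normal form (p^a,0,0), (y,p^c,0), (0,0,1)
  with a \<le> 2c and 0 \<le> y < p^a, and its cotype is (p^(a+c-m), p^m, 1) with m = min(a, c, v_p(y)).
  On the other side, the support of the integrand is partitioned into the cells
  |x| = p^-a, y' \<equiv> y (mod p^a), |z| = p^-c, indexed by the same parameters. The integrand is
  constant on each cell, equal to p^(2a+c) times the zeta term of the corresponding subring,
  and the cell has measure (1 - 1/p)^2 p^-(2a+c). Summing over the cells gives the identity;
  for Re s1, Re s2 \<ge> 2 the series converges absolutely because its terms are bounded by p^-(2a+2c).
\<close>

lemma power_dvd_iff_digits_zero:
  fixes p y :: nat
  assumes "p > 1"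
  shows "p^k dvd y \<longleftrightarrow> (\<forall>i<k. y div p^i mod p = 0)"
proof (induction k)
  case 0
  then show ?case by simp
next
  case (Suc k)
  have "p^Suc k dvd y \<longleftrightarrow> p^k dvd y \<and> y div p^k mod p = 0"
  proof
    assume "p^Suc k dvd y"
    then obtain q where "y = p^Suc k * q" by (rule dvdE)
    then show "p^k dvd y \<and> y div p^k mod p = 0" using assms by (simp add: power_Suc2 mult.assoc)
  next
    assume h: "p^k dvd y \<and> y div p^k mod p = 0"
    then obtain q where q: "y = p^k * q" by (metis dvdE)
    with h assms have "p dvd q" by auto
    then show "p^Suc k dvd y" using q by (simp add: power_Suc2 mult_dvd_mono)
  qed
  also have "\<dots> \<longleftrightarrow> (\<forall>i<Suc k. y div p^i mod p = 0)"
    using Suc by (auto simp: less_Suc_eq)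
  finally show ?case .
qed

lemma sum_digits_eq:
  fixes p y :: nat
  assumes "p > 1" "y < p^a"
  shows "(\<Sum>i<a. (y div p^i mod p) * p^i) = y"
  using assms(2)
proof (induction a arbitrary: y)
  case 0
  then show ?case by simp
next
  case (Suc a)
  have "y div p < p^a" using Suc.prems assms(1) by (simp add: div_less_iff_less_mult mult.commute)
  then have IH: "(\<Sum>i<a. (y div p div p^i mod p) * p^i) = y div p" by (rule Suc.IH)
  have "(\<Sum>i<Suc a. (y div p^i mod p) * p^i) = y mod p + p * (\<Sum>i<a. (y div p div p^i mod p) * p^i)"
    unfolding sum.lessThan_Suc_shift
    by (simp add: sum_distrib_left div_mult2_eq mult_ac)
  then show ?case using IH by simp
qed

lemma digits_of_digit_sum:
  fixes p :: nat
  assumes "\<forall>i<a. d i < p"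
  shows "(\<Sum>i<a. d i * p^i) < p^a \<and> (\<forall>j<a. (\<Sum>i<a. d i * p^i) div p^j mod p = d j)"
  using assms
proof (induction a arbitrary: d)
  case 0
  then show ?case by simp
next
  case (Suc a)
  define t where "t = (\<Sum>i<a. d (Suc i) * p^i)"
  have IH: "t < p^a \<and> (\<forall>j<a. t div p^j mod p = d (Suc j))"
    unfolding t_def using Suc.IH[of "\<lambda>i. d (Suc i)"] Suc.prems by auto
  have sum: "(\<Sum>i<Suc a. d i * p^i) = d 0 + p * t"
    unfolding t_def sum.lessThan_Suc_shift by (simp add: sum_distrib_left mult_ac)
  have d0: "d 0 < p" using Suc.prems by auto
  have "p * (t + 1) \<le> p * p^a" using IH by (intro mult_left_mono) auto
  then have "d 0 + p * t < p^Suc a" using d0 by (simp add: algebra_simps)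
  moreover have "(d 0 + p * t) div p^j mod p = d j" if "j < Suc a" for j
  proof (cases j)
    case 0
    then show ?thesis using d0 by simp
  next
    case (Suc j')
    then have "(d 0 + p * t) div p^j = t div p^j'" using d0 by (simp add: div_mult2_eq)
    then show ?thesis using IH Suc that by simp
  qed
  ultimately show ?case using sum by simp
qed

section \<open>Subrings of R in Hermite normal form\<close>

lemma radd_eq [simp]: "radd (a,b,c) (a',b',c') = (a+a',b+b',c+c')"
  by (simp add: radd_def)

lemma rneg_eq [simp]: "rneg (a,b,c) = (-a,-b,-c)"
  by (simp add: rneg_def)

lemma rmul_eq [simp]: "rmul (a,b,c) (a',b',c') = (c*a' + b*b' + a*c', c*b' + b*c', c*c')"
  by (simp add: rmul_def)

definition rsmul :: "int \<Rightarrow> relt \<Rightarrow> relt" where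
  "rsmul k u = (case u of (a,b,c) \<Rightarrow> (k*a, k*b, k*c))"

lemma rsmul_eq [simp]: "rsmul k (a,b,c) = (k*a, k*b, k*c)"
  by (simp add: rsmul_def)

lemma additive_subgroup_zero: "additive_subgroup S \<Longrightarrow> (0,0,0) \<in> S"
  by (simp add: additive_subgroup_def)

lemma additive_subgroup_radd: "additive_subgroup S \<Longrightarrow> u \<in> S \<Longrightarrow> v \<in> S \<Longrightarrow> radd u v \<in> S"
  by (simp add: additive_subgroup_def)

lemma additive_subgroup_rneg: "additive_subgroup S \<Longrightarrow> u \<in> S \<Longrightarrow> rneg u \<in> S"
  by (simp add: additive_subgroup_def)

lemma additive_subgroup_rsmul:
  assumes S: "additive_subgroup S" and u: "u \<in> S"
  shows "rsmul k u \<in> S"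
proof -
  have nat: "rsmul (int n) u \<in> S" for n
  proof (induction n)
    case 0
    then show ?case using additive_subgroup_zero[OF S] by (cases u) simp
  next
    case (Suc n)
    have "rsmul (int (Suc n)) u = radd (rsmul (int n) u) u" by (cases u) (simp add: algebra_simps)
    then show ?case using additive_subgroup_radd[OF S Suc u] by simp
  qed
  show ?thesis
  proof (cases "k \<ge> 0")
    case True
    then show ?thesis using nat[of "nat k"] by simp
  next
    case False
    then have "rsmul k u = rneg (rsmul (int (nat (-k))) u)" by (cases u) simp
    then show ?thesis using additive_subgroup_rneg[OF S nat[of "nat (-k)"]] by simp
  qed
qed

lemma coset_eq_iff:
  assumes S: "additive_subgroup S"
  shows "coset S u = coset S v \<longleftrightarrow> radd u (rneg v) \<in> S"
proof
  assume "coset S u = coset S v"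
  moreover have "u \<in> coset S u" unfolding coset_def using additive_subgroup_zero[OF S]
    by (cases u) (auto intro!: exI[of _ "(0,0,0)"])
  ultimately obtain s where "s \<in> S" "u = radd v s" unfolding coset_def by auto
  then show "radd u (rneg v) \<in> S" by (cases u, cases v, cases s) simp
next
  assume h: "radd u (rneg v) \<in> S"
  have "coset S u \<subseteq> coset S v" if "radd u (rneg v) \<in> S" for u v
  proof
    fix w assume "w \<in> coset S u"
    then obtain s where s: "s \<in> S" "w = radd u s" unfolding coset_def by auto
    have "radd (radd u (rneg v)) s \<in> S" using additive_subgroup_radd[OF S that s(1)] .
    moreover have "w = radd v (radd (radd u (rneg v)) s)" using s(2) by (cases u, cases v, cases s) simp
    ultimately show "w \<in> coset S v" unfolding coset_def by blast
  qed
  moreover have "radd v (rneg u) \<in> S"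
    using additive_subgroup_rneg[OF S h] by (cases u, cases v) simp
  ultimately show "coset S u = coset S v" using h by blast
qed

lemma index_eq_card_range:
  assumes S: "additive_subgroup S" and g: "\<And>u v. radd u (rneg v) \<in> S \<longleftrightarrow> g u = g v"
  shows "finite_index S \<longleftrightarrow> finite (range g)" and "index S = card (range g)"
proof -
  have fibres: "coset S u = coset S v \<longleftrightarrow> g u = g v" for u v
    using coset_eq_iff[OF S] g by simp
  define h where "h X = g (SOME u. coset S u = X)" for X
  have hc: "h (coset S u) = g u" for u
  proof -
    have "coset S (SOME v. coset S v = coset S u) = coset S u" by (rule someI) simp
    then show ?thesis unfolding h_def using fibres by blast
  qed
  have "inj_on h (range (coset S))"
    unfolding inj_on_def by (auto simp: hc fibres)
  moreover have "h ` range (coset S) = range g"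
    by (simp add: image_image hc)
  ultimately have "bij_betw h (range (coset S)) (range g)"
    unfolding bij_betw_def by blast
  then show "finite_index S \<longleftrightarrow> finite (range g)" and "index S = card (range g)"
    unfolding finite_index_def index_def by (auto dest: bij_betw_finite bij_betw_same_card)
qed

text \<open>The subgroup with basis (x,0,0), (y,z,0), (0,0,1) in Hermite normal form.\<close>
definition hnf_subgroup :: "int \<Rightarrow> int \<Rightarrow> int \<Rightarrow> relt set" where
  "hnf_subgroup x z y = {(a,b,c). z dvd b \<and> x dvd (a - (b div z) * y)}"

lemma mem_hnf_subgroup_iff:
  assumes "z \<noteq> 0"
  shows "(a,b,c) \<in> hnf_subgroup x z y \<longleftrightarrow> (\<exists>j k. b = j*z \<and> a = j*y + k*x)"
proof
  assume "(a,b,c) \<in> hnf_subgroup x z y"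
  then have h: "z dvd b" "x dvd (a - (b div z) * y)" by (auto simp: hnf_subgroup_def)
  obtain k where k: "a - (b div z) * y = x * k" using h(2) by (rule dvdE)
  have "b = (b div z) * z" using h(1) by simp
  moreover have "a = (b div z) * y + k * x" using k by (simp add: algebra_simps)
  ultimately show "\<exists>j k. b = j*z \<and> a = j*y + k*x" by blast
next
  assume "\<exists>j k. b = j*z \<and> a = j*y + k*x"
  then obtain j k where jk: "b = j*z" "a = j*y + k*x" by blast
  then have "b div z = j" using assms by simp
  then show "(a,b,c) \<in> hnf_subgroup x z y" using jk by (auto simp: hnf_subgroup_def)
qed

lemma mem_hnf_subgroupI:
  "z \<noteq> 0 \<Longrightarrow> b = j*z \<Longrightarrow> a = j*y + k*x \<Longrightarrow> (a,b,c) \<in> hnf_subgroup x z y"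
  using mem_hnf_subgroup_iff by blast

lemma mem_hnf_subgroupE:
  assumes "z \<noteq> 0" "u \<in> hnf_subgroup x z y"
  obtains j k c where "u = (j*y + k*x, j*z, c)"
  using assms mem_hnf_subgroup_iff by (cases u) blast

lemma additive_subgroup_hnf_subgroup:
  assumes z: "z \<noteq> 0"
  shows "additive_subgroup (hnf_subgroup x z y)"
  unfolding additive_subgroup_def
proof (intro conjI ballI)
  show "(0,0,0) \<in> hnf_subgroup x z y" by (simp add: hnf_subgroup_def)
next
  fix u v assume "u \<in> hnf_subgroup x z y" "v \<in> hnf_subgroup x z y"
  moreover obtain j k c where "u = (j*y + k*x, j*z, c)"
    using mem_hnf_subgroupE[OF z \<open>u \<in> hnf_subgroup x z y\<close>] .
  moreover obtain j' k' c' where "v = (j'*y + k'*x, j'*z, c')"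
    using mem_hnf_subgroupE[OF z \<open>v \<in> hnf_subgroup x z y\<close>] .
  ultimately show "radd u v \<in> hnf_subgroup x z y"
    by (auto intro!: mem_hnf_subgroupI[OF z, of _ "j+j'" _ _ "k+k'"] simp: algebra_simps)
next
  fix u assume "u \<in> hnf_subgroup x z y"
  then obtain j k c where "u = (j*y + k*x, j*z, c)" by (rule mem_hnf_subgroupE[OF z])
  then show "rneg u \<in> hnf_subgroup x z y"
    by (auto intro!: mem_hnf_subgroupI[OF z, of _ "-j" _ _ "-k"] simp: algebra_simps)
qed

lemma index_hnf_subgroup:
  assumes x: "x > 0" and z: "z > 0"
  shows "finite_index (hnf_subgroup x z y)" and "index (hnf_subgroup x z y) = nat (x*z)"
proof -
  define g :: "relt \<Rightarrow> int \<times> int" where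
    "g u = (case u of (a,b,c) \<Rightarrow> (b mod z, (a - (b div z) * y) mod x))" for u
  have sep: "radd u (rneg v) \<in> hnf_subgroup x z y \<longleftrightarrow> g u = g v" for u v
  proof -
    obtain a b c a' b' c' where uv: "u = (a,b,c)" "v = (a',b',c')" by (cases u, cases v)
    have "radd u (rneg v) \<in> hnf_subgroup x z y
        \<longleftrightarrow> z dvd b - b' \<and> x dvd (a - a') - ((b - b') div z) * y"
      by (simp add: uv hnf_subgroup_def)
    also have "\<dots> \<longleftrightarrow> b mod z = b' mod z \<and> x dvd (a - b div z * y) - (a' - b' div z * y)"
    proof (cases "b mod z = b' mod z")
      case True
      have "b - b' = z * (b div z - b' div z)"
        using True mult_div_mod_eq[of z b] mult_div_mod_eq[of z b']
        by (simp only: right_diff_distrib; linarith)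
      then have "(b - b') div z = b div z - b' div z" using z by simp
      then have eq: "(a - a') - ((b - b') div z) * y = (a - b div z * y) - (a' - b' div z * y)"
        by (simp add: left_diff_distrib)
      show ?thesis unfolding eq using True by (simp add: mod_eq_dvd_iff)
    qed (simp add: mod_eq_dvd_iff)
    also have "\<dots> \<longleftrightarrow> g u = g v"
      by (simp add: uv g_def mod_eq_dvd_iff)
    finally show ?thesis .
  qed
  have "range g = {0..<z} \<times> {0..<x}"
  proof (intro set_eqI iffI)
    fix t assume "t \<in> {0..<z} \<times> {0..<x}"
    then have "g (snd t, fst t, 0) = t" using x z by (cases t) (simp add: g_def)
    then show "t \<in> range g" by (metis rangeI)
  qed (use x z in \<open>auto simp: g_def split: prod.splits\<close>)
  then show "finite_index (hnf_subgroup x z y)" "index (hnf_subgroup x z y) = nat (x*z)"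
    using index_eq_card_range[OF additive_subgroup_hnf_subgroup sep] x z
    by (simp_all add: card_cartesian_product nat_mult_distrib)
qed

lemma is_subring_hnf_subgroup:
  assumes x: "x > 0" and z: "z > 0" and xz: "x dvd z^2"
  shows "is_subring (hnf_subgroup x z y)"
proof -
  have z0: "z \<noteq> 0" using z by simp
  obtain m where m: "z^2 = x * m" using xz by (rule dvdE)
  have "rmul u v \<in> hnf_subgroup x z y"
    if u: "u \<in> hnf_subgroup x z y" and v: "v \<in> hnf_subgroup x z y" for u v
  proof -
    obtain j k c where u: "u = (j*y + k*x, j*z, c)"
      using mem_hnf_subgroupE[OF z0 u] .
    obtain j' k' c' where v: "v = (j'*y + k'*x, j'*z, c')"
      using mem_hnf_subgroupE[OF z0 v] .
    have "c*(j'*y + k'*x) + j*z*(j'*z) + (j*y + k*x)*c'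
        = (c*j' + j*c')*y + (c*k' + j*j'*m + k*c')*x"
      using m by (simp add: algebra_simps power2_eq_square)
    moreover have "c*(j'*z) + j*z*c' = (c*j' + j*c')*z" by (simp add: algebra_simps)
    ultimately show ?thesis unfolding u v rmul_eq by (rule mem_hnf_subgroupI[OF z0, rotated])
  qed
  moreover have "rone \<in> hnf_subgroup x z y" by (simp add: rone_def hnf_subgroup_def)
  ultimately show ?thesis unfolding is_subring_def
    using additive_subgroup_hnf_subgroup[OF z0] index_hnf_subgroup(1)[OF x z] by blast
qed

lemma additive_subgroup_lincomb:
  assumes "additive_subgroup S" "u \<in> S" "v \<in> S" "w \<in> S"
  shows "radd (radd (rsmul i u) (rsmul j v)) (rsmul k w) \<in> S"
  using assms by (intro additive_subgroup_radd additive_subgroup_rsmul)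

lemma finite_index_multiple_mem:
  assumes S: "additive_subgroup S" and fin: "finite_index S"
  obtains n :: int where "n > 0" "rsmul n e \<in> S"
proof -
  define f where "f n = coset S (rsmul (int n) e)" for n :: nat
  have "range f \<subseteq> range (coset S)" unfolding f_def by auto
  then have "\<not> inj f"
    using fin finite_subset finite_imageD infinite_UNIV_nat unfolding finite_index_def by blast
  then obtain n m where "n < m" "f n = f m"
    unfolding inj_def by (metis linorder_neqE_nat)
  moreover have "rsmul (int m - int n) e = rneg (radd (rsmul (int n) e) (rneg (rsmul (int m) e)))"
    by (cases e) (simp add: algebra_simps)
  ultimately show ?thesis
    using that[of "int m - int n"] coset_eq_iff[OF S] additive_subgroup_rneg[OF S]
    unfolding f_def by auto
qed

lemma int_subgroup_eq_multiples:
  fixes A :: "int set"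
  assumes lincomb: "\<And>s t k. s \<in> A \<Longrightarrow> t \<in> A \<Longrightarrow> t - k * s \<in> A" and n: "n \<in> A" "n > 0"
  obtains x where "x > 0" "A = {t. x dvd t}"
proof -
  define m where "m = (LEAST m::nat. m > 0 \<and> int m \<in> A)"
  have m: "m > 0 \<and> int m \<in> A"
    unfolding m_def by (rule LeastI[of _ "nat n"]) (use n in simp)
  have m_least: "\<not> (k > 0 \<and> int k \<in> A)" if "k < m" for k
    using that unfolding m_def by (rule not_less_Least)
  define x where "x = int m"
  have x: "x > 0" "x \<in> A" using m by (simp_all add: x_def)
  have "x dvd t" if "t \<in> A" for t
  proof (rule ccontr)
    assume "\<not> x dvd t"
    then have "t mod x > 0" using x(1) by (simp add: dvd_eq_mod_eq_0 order_less_le)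
    moreover have "t mod x \<in> A"
      using lincomb[OF x(2) that, of "t div x"] by (simp add: minus_div_mult_eq_mod)
    moreover have "nat (t mod x) < m" using x(1) pos_mod_bound[of x t] by (simp add: x_def nat_less_iff)
    ultimately show False using m_least[of "nat (t mod x)"] by simp
  qed
  moreover have "k * x \<in> A" for k
    using lincomb[OF x(2) lincomb[OF x(2) x(2), of 1], of "-k"] by simp
  ultimately have "A = {t. x dvd t}" by (auto simp: dvd_def mult.commute)
  with x(1) show ?thesis by (rule that)
qed

lemma finite_index_first_coord_eq_multiples:
  assumes S: "additive_subgroup S" and fin: "finite_index S"
  obtains x where "x > 0" "\<And>t. (t,0,0) \<in> S \<longleftrightarrow> x dvd t"
proof -
  obtain n where n: "n > 0" "rsmul n (1,0,0) \<in> S" by (rule finite_index_multiple_mem[OF S fin])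
  have "t - k * s \<in> {t. (t,0,0) \<in> S}" if "s \<in> {t. (t,0,0) \<in> S}" "t \<in> {t. (t,0,0) \<in> S}" for s t k
    using that additive_subgroup_lincomb[OF S, of "(t,0,0)" "(s,0,0)" "(s,0,0)" 1 "-k" 0] by simp
  moreover have "n \<in> {t. (t,0,0) \<in> S}" using n(2) by simp
  ultimately obtain x where "x > 0" "{t. (t,0,0) \<in> S} = {t. x dvd t}"
    using n(1) by (rule int_subgroup_eq_multiples)
  then show ?thesis using that by (simp add: set_eq_iff)
qed

lemma finite_index_second_coord_eq_multiples:
  assumes S: "additive_subgroup S" and fin: "finite_index S"
  obtains z where "z > 0" "\<And>b. (\<exists>a c. (a,b,c) \<in> S) \<longleftrightarrow> z dvd b"
proof -
  obtain n where n: "n > 0" "rsmul n (0,1,0) \<in> S" by (rule finite_index_multiple_mem[OF S fin])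
  have "t - k * s \<in> {b. \<exists>a c. (a,b,c) \<in> S}"
    if st: "s \<in> {b. \<exists>a c. (a,b,c) \<in> S}" "t \<in> {b. \<exists>a c. (a,b,c) \<in> S}" for s t k
  proof -
    obtain a1 c1 a2 c2 where "(a1,s,c1) \<in> S" "(a2,t,c2) \<in> S" using st by blast
    from additive_subgroup_lincomb[OF S this(2) this(1) this(1), of 1 "-k" 0]
    have "(a2 - k*a1, t - k * s, c2 - k*c1) \<in> S" by (simp add: algebra_simps)
    then show ?thesis by blast
  qed
  moreover have "n \<in> {b. \<exists>a c. (a,b,c) \<in> S}" using n(2) by auto
  ultimately obtain z where "z > 0" "{b. \<exists>a c. (a,b,c) \<in> S} = {b. z dvd b}"
    using n(1) by (rule int_subgroup_eq_multiples)
  then show ?thesis using that by (simp add: set_eq_iff)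
qed

text \<open>The third basis vector can be taken to be the unit, and x divides z^2 because
  (y,z,0)^2 = (z^2,0,0).\<close>
lemma subring_eq_hnf_subgroup:
  assumes R: "is_subring S"
  obtains x z y where "x > 0" "z > 0" "0 \<le> y" "y < x" "x dvd z^2" "S = hnf_subgroup x z y"
proof -
  have S: "additive_subgroup S" and fin: "finite_index S" and one: "(0,0,1) \<in> S"
    and mul: "\<And>u v. u \<in> S \<Longrightarrow> v \<in> S \<Longrightarrow> rmul u v \<in> S"
    using R by (auto simp: is_subring_def rone_def)
  note lincomb = additive_subgroup_lincomb[OF S]
  obtain x where x: "x > 0" and xS: "\<And>t. (t,0,0) \<in> S \<longleftrightarrow> x dvd t"
    by (rule finite_index_first_coord_eq_multiples[OF S fin]) blast
  obtain z where z: "z > 0" and zS: "\<And>b. (\<exists>a c. (a,b,c) \<in> S) \<longleftrightarrow> z dvd b"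
    by (rule finite_index_second_coord_eq_multiples[OF S fin]) blast
  have x_mem: "(x,0,0) \<in> S" using xS by simp
  have z0: "z \<noteq> 0" using z by simp
  obtain a0 c0 where a0: "(a0, z, c0) \<in> S" using zS[of z] by auto
  define y where "y = a0 mod x"
  from lincomb[OF a0 one x_mem, of 1 "-c0" "-(a0 div x)"]
  have "(a0 - a0 div x * x, z, 0) \<in> S" by simp
  then have yS: "(y, z, 0) \<in> S" by (simp only: y_def minus_div_mult_eq_mod)
  have "S = hnf_subgroup x z y"
  proof (intro set_eqI iffI)
    fix u assume u: "u \<in> S"
    obtain a b c where abc: "u = (a,b,c)" by (cases u)
    have "z dvd b" using u zS unfolding abc by blast
    then obtain j where j: "b = j * z" by (metis dvd_def mult.commute)
    from lincomb[OF u[unfolded abc] yS one, of 1 "-j" "-c"]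
    have "x dvd a - j*y" using j xS by simp
    then obtain k where "a - j*y = x * k" by (rule dvdE)
    then have "a = j*y + k*x" by (simp add: algebra_simps)
    then show "u \<in> hnf_subgroup x z y" unfolding abc by (rule mem_hnf_subgroupI[OF z0 j])
  next
    fix u assume "u \<in> hnf_subgroup x z y"
    then obtain j k c where u: "u = (j*y + k*x, j*z, c)" by (rule mem_hnf_subgroupE[OF z0])
    from lincomb[OF yS x_mem one, of j k c]
    show "u \<in> S" unfolding u by (simp add: algebra_simps)
  qed
  moreover have "x dvd z^2"
    using mul[OF yS yS] xS by (simp add: power2_eq_square)
  moreover have "0 \<le> y" "y < x" using x by (simp_all add: y_def)
  ultimately show ?thesis using x z that by blast
qed

section \<open>Cotypes\<close>

definition radditive :: "(relt \<Rightarrow> relt) \<Rightarrow> bool" where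
  "radditive \<phi> \<longleftrightarrow> (\<forall>u v. \<phi> (radd u v) = radd (\<phi> u) (\<phi> v))"

lemma radditive_rsmul:
  assumes \<phi>: "radditive \<phi>"
  shows "\<phi> (rsmul k u) = rsmul k (\<phi> u)"
proof -
  have add: "\<phi> (radd u v) = radd (\<phi> u) (\<phi> v)" for u v using \<phi> unfolding radditive_def by blast
  have zero: "\<phi> (0,0,0) = (0,0,0)"
    using add[of "(0,0,0)" "(0,0,0)"] by (cases "\<phi> (0,0,0)") simp
  have nat: "\<phi> (rsmul (int n) u) = rsmul (int n) (\<phi> u)" for n
  proof (induction n)
    case 0
    then show ?case using zero by (cases u, cases "\<phi> u") simp
  next
    case (Suc n)
    have "rsmul (int (Suc n)) u = radd (rsmul (int n) u) u" by (cases u) (simp add: algebra_simps)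
    then show ?case using add Suc by (cases "\<phi> u") (simp add: algebra_simps)
  qed
  show ?thesis
  proof (cases "k \<ge> 0")
    case True
    then show ?thesis using nat[of "nat k"] by simp
  next
    case False
    define n where "n = nat (-k)"
    have "radd (rsmul k u) (rsmul (int n) u) = (0,0,0)" using False by (cases u) (simp add: n_def)
    then have "radd (\<phi> (rsmul k u)) (rsmul (int n) (\<phi> u)) = (0,0,0)" using add zero nat by metis
    then show ?thesis using False by (cases "\<phi> (rsmul k u)", cases "\<phi> u") (simp add: n_def)
  qed
qed

lemma radditive_linear:
  assumes "radditive \<phi>"
  shows "\<phi> (a,b,c) = radd (radd (rsmul a (\<phi> (1,0,0))) (rsmul b (\<phi> (0,1,0)))) (rsmul c (\<phi> (0,0,1)))"
proof -
  have "(a,b,c) = radd (radd (rsmul a (1,0,0)) (rsmul b (0,1,0))) (rsmul c (0,0,1))" by simp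
  then show ?thesis using assms radditive_rsmul[OF assms] unfolding radditive_def by metis
qed

lemma radditive_diff:
  assumes "radditive \<phi>"
  shows "\<phi> (radd u (rneg v)) = radd (\<phi> u) (rneg (\<phi> v))"
proof -
  have "rneg v = rsmul (-1) v" "rneg (\<phi> v) = rsmul (-1) (\<phi> v)" by (cases v, cases "\<phi> v", simp)+
  then show ?thesis using assms radditive_rsmul[OF assms] unfolding radditive_def by metis
qed

definition in_diag_lattice :: "nat \<Rightarrow> nat \<Rightarrow> nat \<Rightarrow> relt \<Rightarrow> bool" where
  "in_diag_lattice a1 a2 a3 t \<longleftrightarrow> (case t of (x,y,z) \<Rightarrow> int a1 dvd x \<and> int a2 dvd y \<and> int a3 dvd z)"

lemma in_diag_lattice_eq [simp]:
  "in_diag_lattice a1 a2 a3 (x,y,z) \<longleftrightarrow> int a1 dvd x \<and> int a2 dvd y \<and> int a3 dvd z"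
  by (simp add: in_diag_lattice_def)

lemma quotient_iso_iff:
  "quotient_iso S a1 a2 a3 \<longleftrightarrow> (\<exists>\<phi>. radditive \<phi> \<and> (\<forall>u. u \<in> S \<longleftrightarrow> in_diag_lattice a1 a2 a3 (\<phi> u))
      \<and> (\<forall>x y z. \<exists>u. in_diag_lattice a1 a2 a3 (radd (\<phi> u) (rneg (x,y,z)))))"
proof -
  have "in_diag_lattice a1 a2 a3 (radd t (rneg (x,y,z))) \<longleftrightarrow>
      (case t of (x',y',z') \<Rightarrow> int a1 dvd x' - x \<and> int a2 dvd y' - y \<and> int a3 dvd z' - z)" for t x y z
    by (cases t) simp
  then show ?thesis
    unfolding quotient_iso_def radditive_def in_diag_lattice_def[abs_def] by simp
qed

lemma quotient_iso_exponent:
  assumes q: "quotient_iso S a1 a2 a3" and d: "a2 dvd a1" "a3 dvd a2"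
  shows "(\<forall>u. rsmul k u \<in> S) \<longleftrightarrow> int a1 dvd k"
proof -
  obtain \<phi> where \<phi>: "radditive \<phi>" and ker: "\<And>u. u \<in> S \<longleftrightarrow> in_diag_lattice a1 a2 a3 (\<phi> u)"
    and onto: "\<And>x y z. \<exists>u. in_diag_lattice a1 a2 a3 (radd (\<phi> u) (rneg (x,y,z)))"
    using q unfolding quotient_iso_iff by blast
  show ?thesis
  proof
    assume all: "\<forall>u. rsmul k u \<in> S"
    obtain u where u: "in_diag_lattice a1 a2 a3 (radd (\<phi> u) (rneg (1,0,0)))" using onto by blast
    obtain X Y Z where XYZ: "\<phi> u = (X,Y,Z)" by (cases "\<phi> u")
    have "in_diag_lattice a1 a2 a3 (\<phi> (rsmul k u))" using all ker by blast
    then have "int a1 dvd k * X" using radditive_rsmul[OF \<phi>, of k u] XYZ by simp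
    moreover have "int a1 dvd k * (X - 1)" using u XYZ by simp
    ultimately have "int a1 dvd k * X - k * (X - 1)" by (rule dvd_diff)
    then show "int a1 dvd k" by (simp add: algebra_simps)
  next
    assume k: "int a1 dvd k"
    have "int a2 dvd int a1" "int a3 dvd int a2" using d by simp_all
    then have "int a2 dvd k" "int a3 dvd k" using k by (meson dvd_trans)+
    show "\<forall>u. rsmul k u \<in> S"
    proof
      fix u
      obtain X Y Z where "\<phi> u = (X,Y,Z)" by (cases "\<phi> u")
      then show "rsmul k u \<in> S"
        using k \<open>int a2 dvd k\<close> \<open>int a3 dvd k\<close> ker radditive_rsmul[OF \<phi>, of k u] by simp
    qed
  qed
qed

lemma quotient_iso_index:
  assumes S: "additive_subgroup S" and q: "quotient_iso S a1 a2 a3"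
    and pos: "a1 > 0" "a2 > 0" "a3 > 0"
  shows "finite_index S" "index S = a1 * a2 * a3"
proof -
  obtain \<phi> where \<phi>: "radditive \<phi>" and ker: "\<And>u. u \<in> S \<longleftrightarrow> in_diag_lattice a1 a2 a3 (\<phi> u)"
    and onto: "\<And>x y z. \<exists>u. in_diag_lattice a1 a2 a3 (radd (\<phi> u) (rneg (x,y,z)))"
    using q unfolding quotient_iso_iff by blast
  define g :: "relt \<Rightarrow> relt" where
    "g u = (case \<phi> u of (X,Y,Z) \<Rightarrow> (X mod int a1, Y mod int a2, Z mod int a3))" for u
  have sep: "radd u (rneg v) \<in> S \<longleftrightarrow> g u = g v" for u v
    using ker[of "radd u (rneg v)"] radditive_diff[OF \<phi>]
    by (cases "\<phi> u", cases "\<phi> v") (simp add: g_def mod_eq_dvd_iff)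
  have "range g = {0..<int a1} \<times> {0..<int a2} \<times> {0..<int a3}"
  proof (intro set_eqI iffI)
    fix t assume "t \<in> {0..<int a1} \<times> {0..<int a2} \<times> {0..<int a3}"
    moreover obtain r s w where t: "t = (r,s,w)" by (cases t)
    moreover obtain u where "in_diag_lattice a1 a2 a3 (radd (\<phi> u) (rneg (r,s,w)))" using onto by blast
    ultimately have "g u = t"
      by (cases "\<phi> u") (auto simp: g_def mod_eq_dvd_iff[symmetric] mod_pos_pos_trivial)
    then show "t \<in> range g" by (metis rangeI)
  qed (use pos in \<open>auto simp: g_def split: prod.splits\<close>)
  then show "finite_index S" "index S = a1 * a2 * a3"
    using index_eq_card_range[OF S sep] pos by (simp_all add: card_cartesian_product nat_mult_distrib)
qed

definition det3 :: "int \<Rightarrow> int \<Rightarrow> int \<Rightarrow> int \<Rightarrow> int \<Rightarrow> int \<Rightarrow> int \<Rightarrow> int \<Rightarrow> int \<Rightarrow> int" where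
  "det3 m11 m12 m13 m21 m22 m23 m31 m32 m33 =
     m11*(m22*m33 - m23*m32) - m12*(m21*m33 - m23*m31) + m13*(m21*m32 - m22*m31)"

lemma det3_cong_mod:
  assumes "m11 mod n = l11 mod n" "m12 mod n = l12 mod n" "m13 mod n = l13 mod n"
    "m21 mod n = l21 mod n" "m22 mod n = l22 mod n" "m23 mod n = l23 mod n"
    "m31 mod n = l31 mod n" "m32 mod n = l32 mod n" "m33 mod n = l33 mod n"
  shows "det3 m11 m12 m13 m21 m22 m23 m31 m32 m33 mod n = det3 l11 l12 l13 l21 l22 l23 l31 l32 l33 mod n"
  unfolding det3_def by (intro mod_add_cong mod_diff_cong mod_mult_cong assms)

lemma det3_rank_le_2:
  "det3 (p1*A1 + q1*B1) (p1*A2 + q1*B2) (p1*A3 + q1*B3)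
        (p2*A1 + q2*B1) (p2*A2 + q2*B2) (p2*A3 + q2*B3)
        (p3*A1 + q3*B1) (p3*A2 + q3*B2) (p3*A3 + q3*B3) = 0"
  unfolding det3_def by (simp add: algebra_simps)

lemma rank_le_2_mod_identity_dvd_1:
  fixes n :: int
  assumes "(p1*A1 + q1*B1) mod n = 1 mod n" "(p1*A2 + q1*B2) mod n = 0 mod n"
    "(p1*A3 + q1*B3) mod n = 0 mod n" "(p2*A1 + q2*B1) mod n = 0 mod n"
    "(p2*A2 + q2*B2) mod n = 1 mod n" "(p2*A3 + q2*B3) mod n = 0 mod n"
    "(p3*A1 + q3*B1) mod n = 0 mod n" "(p3*A2 + q3*B2) mod n = 0 mod n"
    "(p3*A3 + q3*B3) mod n = 1 mod n"
  shows "n dvd 1"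
proof -
  have "0 mod n = det3 1 0 0 0 1 0 0 0 1 mod n"
    using det3_cong_mod[OF assms] by (simp only: det3_rank_le_2)
  then have "1 mod n = 0" by (simp add: det3_def)
  then show ?thesis by (simp add: dvd_eq_mod_eq_0)
qed

text \<open>Modulo a3 the map would send the rank-2 lattice Z (1,0,0) + Z (0,1,0) onto (Z/a3)^3,
  which a determinant argument rules out unless a3 = 1.\<close>
lemma quotient_iso_third_eq_1:
  assumes q: "quotient_iso S a1 a2 a3" and d: "a2 dvd a1" "a3 dvd a2" and one: "rone \<in> S"
  shows "a3 = 1"
proof -
  obtain \<phi> where \<phi>: "radditive \<phi>" and ker: "\<And>u. u \<in> S \<longleftrightarrow> in_diag_lattice a1 a2 a3 (\<phi> u)"
    and onto: "\<And>x y z. \<exists>u. in_diag_lattice a1 a2 a3 (radd (\<phi> u) (rneg (x,y,z)))"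
    using q unfolding quotient_iso_iff by blast
  define n where "n = int a3"
  have "int a3 dvd int a2" "int a2 dvd int a1" using d by simp_all
  then have n: "n dvd int a1" "n dvd int a2" "n dvd int a3" unfolding n_def by (meson dvd_trans dvd_refl)+
  obtain A1 A2 A3 where A: "\<phi> (1,0,0) = (A1,A2,A3)" by (cases "\<phi> (1,0,0)")
  obtain B1 B2 B3 where B: "\<phi> (0,1,0) = (B1,B2,B3)" by (cases "\<phi> (0,1,0)")
  obtain C1 C2 C3 where C: "\<phi> (0,0,1) = (C1,C2,C3)" by (cases "\<phi> (0,0,1)")
  have lin: "\<phi> (a,b,c) = (a*A1 + b*B1 + c*C1, a*A2 + b*B2 + c*C2, a*A3 + b*B3 + c*C3)" for a b c
    using radditive_linear[OF \<phi>] A B C by (simp add: algebra_simps)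
  have "in_diag_lattice a1 a2 a3 (C1,C2,C3)" using ker one C by (simp add: rone_def)
  then have "n dvd C1" "n dvd C2" "n dvd C3" using n by (meson dvd_trans in_diag_lattice_eq)+
  then have drop: "(v + r*Ci) mod n = v mod n" if "Ci \<in> {C1,C2,C3}" for v r Ci
    using that by (auto elim!: dvdE simp: mult.left_commute[of r n])
  have reach: "\<exists>p q. (p*A1 + q*B1) mod n = X mod n \<and> (p*A2 + q*B2) mod n = Y mod n
      \<and> (p*A3 + q*B3) mod n = Z mod n" for X Y Z
  proof -
    obtain u where u: "in_diag_lattice a1 a2 a3 (radd (\<phi> u) (rneg (X,Y,Z)))" using onto by blast
    obtain p q r where pqr: "u = (p,q,r)" by (cases u)
    have "int a1 dvd (p*A1 + q*B1 + r*C1) - X" "int a2 dvd (p*A2 + q*B2 + r*C2) - Y"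
      "int a3 dvd (p*A3 + q*B3 + r*C3) - Z"
      using u unfolding pqr lin by simp_all
    then have "(p*A1 + q*B1 + r*C1) mod n = X mod n" "(p*A2 + q*B2 + r*C2) mod n = Y mod n"
      "(p*A3 + q*B3 + r*C3) mod n = Z mod n"
      using n by (meson dvd_trans mod_eq_dvd_iff)+
    then show ?thesis using drop by (intro exI[of _ p] exI[of _ q]) simp
  qed
  obtain p1 q1 where 1: "(p1*A1 + q1*B1) mod n = 1 mod n" "(p1*A2 + q1*B2) mod n = 0 mod n"
    "(p1*A3 + q1*B3) mod n = 0 mod n" using reach[of 1 0 0] by blast
  obtain p2 q2 where 2: "(p2*A1 + q2*B1) mod n = 0 mod n" "(p2*A2 + q2*B2) mod n = 1 mod n"
    "(p2*A3 + q2*B3) mod n = 0 mod n" using reach[of 0 1 0] by blast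
  obtain p3 q3 where 3: "(p3*A1 + q3*B1) mod n = 0 mod n" "(p3*A2 + q3*B2) mod n = 0 mod n"
    "(p3*A3 + q3*B3) mod n = 1 mod n" using reach[of 0 0 1] by blast
  have "int a3 dvd 1" unfolding n_def[symmetric] by (rule rank_le_2_mod_identity_dvd_1[OF 1 2 3])
  then show ?thesis by simp
qed

lemma cotype_eqI:
  assumes S: "additive_subgroup S" and one: "rone \<in> S" and q: "quotient_iso S c1 c2 1"
    and pos: "c1 > 0" "c2 > 0" and d: "c2 dvd c1"
  shows "cotype S = (c1, c2, 1)"
  unfolding cotype_def
proof (rule the_equality)
  show "is_cotype S (c1, c2, 1)" using pos d q by (simp add: is_cotype_def)
next
  fix b assume "is_cotype S b"
  then obtain b1 b2 b3 where b: "b = (b1,b2,b3)" "b1 > 0" "b2 > 0" "b3 > 0" "b2 dvd b1" "b3 dvd b2"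
    "quotient_iso S b1 b2 b3" unfolding is_cotype_def by (cases b) auto
  have b3: "b3 = 1" using quotient_iso_third_eq_1[OF b(7) b(5) b(6) one] .
  have "int b1 dvd k \<longleftrightarrow> int c1 dvd k" for k
    using quotient_iso_exponent[OF b(7) b(5,6), of k] quotient_iso_exponent[OF q d, of k] by simp
  then have b1: "b1 = c1" by (metis dvd_antisym dvd_refl of_nat_dvd_iff)
  have "b1 * b2 * b3 = c1 * c2 * 1"
    using quotient_iso_index(2)[OF S b(7) b(2-4)] quotient_iso_index(2)[OF S q pos] by simp
  then have "b2 = c2" using b1 b3 pos by simp
  then show "b = (c1, c2, 1)" using b b1 b3 by simp
qed

lemma radditive_linear_map: "radditive (\<lambda>(u,v,w). (k1 * u + k2 * v, k3 * u + k4 * v, 0))"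
  unfolding radditive_def by (simp add: algebra_simps split: prod.split)

lemma quotient_iso_hnf_subgroup_dvd:
  fixes x z :: nat and t :: int
  assumes z: "z > 0"
  shows "quotient_iso (hnf_subgroup (int x) (int z) (int z * t)) x z 1"
proof -
  define \<phi> :: "relt \<Rightarrow> relt" where "\<phi> = (\<lambda>(u,v,w). (1 * u + (-t) * v, 0 * u + 1 * v, 0))"
  show ?thesis unfolding quotient_iso_iff
  proof (intro exI[of _ \<phi>] conjI allI)
    show "radditive \<phi>" unfolding \<phi>_def by (rule radditive_linear_map)
    show "u \<in> hnf_subgroup (int x) (int z) (int z * t) \<longleftrightarrow> in_diag_lattice x z 1 (\<phi> u)" for u
    proof -
      obtain a b c where u: "u = (a,b,c)" by (cases u)
      show ?thesis
      proof (cases "int z dvd b")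
        case True
        then obtain j where "b = int z * j" by (rule dvdE)
        then show ?thesis using z by (simp add: u \<phi>_def hnf_subgroup_def algebra_simps)
      qed (simp add: u \<phi>_def hnf_subgroup_def)
    qed
    show "\<exists>u. in_diag_lattice x z 1 (radd (\<phi> u) (rneg (X,Y,Z)))" for X Y Z
      by (rule exI[of _ "(X + t * Y, Y, 0)"]) (simp add: \<phi>_def)
  qed
qed

lemma mem_hnf_subgroup_coprime_iff:
  fixes r x1 z1 :: nat and y1 s t :: int
  assumes r: "r > 0" and z1: "z1 > 0" and bezout: "s * int x1 + t * y1 = 1"
  shows "(a,b,c) \<in> hnf_subgroup (int (r * x1)) (int (r * z1)) (int r * y1)
    \<longleftrightarrow> int r * x1 * z1 dvd b - t * z1 * a \<and> int r dvd a"
proof -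
  have z0: "int (r * z1) \<noteq> 0" using r z1 by simp
  have st: "1 - t * y1 = s * int x1" using bezout by linarith
  show ?thesis
  proof
    assume "(a,b,c) \<in> hnf_subgroup (int (r * x1)) (int (r * z1)) (int r * y1)"
    then obtain j k :: int where jk: "b = j * int (r * z1)" "a = j * (int r * y1) + k * int (r * x1)"
      using mem_hnf_subgroup_iff[OF z0] by auto
    then have "b - t * z1 * a = r * z1 * (j * (1 - t * y1) - t * k * x1)"
      by (simp add: algebra_simps)
    also have "\<dots> = r * x1 * z1 * (j * s - t * k)"
      unfolding st by (simp add: algebra_simps)
    finally show "int r * x1 * z1 dvd b - t * z1 * a \<and> int r dvd a"
      using jk by (simp add: algebra_simps)
  next
    assume "int r * x1 * z1 dvd b - t * z1 * a \<and> int r dvd a"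
    then obtain a' n' :: int where a': "a = r * a'" and n': "b - t * z1 * a = r * x1 * z1 * n'"
      by (auto elim!: dvdE)
    have b: "b = (t * a' + x1 * n') * (r * z1)" using a' n' by (simp add: algebra_simps)
    have "a - (t * a' + x1 * n') * (r * y1) = r * (a' * (1 - t * y1) - x1 * n' * y1)"
      using a' by (simp add: algebra_simps)
    also have "\<dots> = (a' * s - n' * y1) * (r * x1)"
      unfolding st by (simp add: algebra_simps)
    finally have "a = (t * a' + x1 * n') * (r * y1) + (a' * s - n' * y1) * (r * x1)"
      by (simp add: algebra_simps)
    with b show "(a,b,c) \<in> hnf_subgroup (int (r * x1)) (int (r * z1)) (int r * y1)"
      by (intro mem_hnf_subgroupI[OF z0]) simp_all
  qed
qed

text \<open>The Bezout relation diagonalises the quotient: (a,b,c) \<mapsto> (b - t z1 a, a) maps R/S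
  isomorphically onto Z/(r x1 z1) \<times> Z/r.\<close>
lemma quotient_iso_hnf_subgroup_coprime:
  fixes r x1 z1 :: nat and y1 s t :: int
  assumes r: "r > 0" and z1: "z1 > 0" and bezout: "s * int x1 + t * y1 = 1"
  shows "quotient_iso (hnf_subgroup (int (r * x1)) (int (r * z1)) (int r * y1)) (r * x1 * z1) r 1"
proof -
  define \<phi> :: "relt \<Rightarrow> relt" where "\<phi> = (\<lambda>(u,v,w). ((-t * z1) * u + 1 * v, 1 * u + 0 * v, 0))"
  show ?thesis unfolding quotient_iso_iff
  proof (intro exI[of _ \<phi>] conjI allI)
    show "radditive \<phi>" unfolding \<phi>_def by (rule radditive_linear_map)
    show "u \<in> hnf_subgroup (int (r * x1)) (int (r * z1)) (int r * y1)
        \<longleftrightarrow> in_diag_lattice (r * x1 * z1) r 1 (\<phi> u)" for u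
    proof -
      obtain a b c where u: "u = (a,b,c)" by (cases u)
      show ?thesis unfolding u mem_hnf_subgroup_coprime_iff[OF r z1 bezout]
        by (simp add: \<phi>_def algebra_simps)
    qed
    show "\<exists>u. in_diag_lattice (r * x1 * z1) r 1 (radd (\<phi> u) (rneg (X,Y,Z)))" for X Y Z
      by (rule exI[of _ "(Y, X + t * z1 * Y, 0)"]) (simp add: \<phi>_def)
  qed
qed

text \<open>The exponent of alpha2 is min a c (v_p y); GREATEST avoids the junk value multiplicity p 0 = 0.\<close>
definition alpha2_exp :: "nat \<Rightarrow> nat \<Rightarrow> nat \<Rightarrow> nat \<Rightarrow> nat" where
  "alpha2_exp p a c y = (GREATEST k. k \<le> min a c \<and> p^k dvd y)"

lemma alpha2_exp:
  shows alpha2_exp_le: "alpha2_exp p a c y \<le> min a c"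
    and alpha2_exp_dvd: "p ^ alpha2_exp p a c y dvd y"
    and alpha2_exp_greatest: "k \<le> min a c \<Longrightarrow> p^k dvd y \<Longrightarrow> k \<le> alpha2_exp p a c y"
proof -
  have "alpha2_exp p a c y \<le> min a c \<and> p ^ alpha2_exp p a c y dvd y"
    unfolding alpha2_exp_def
    by (rule GreatestI_nat[where k=0 and b="min a c"]) auto
  then show "alpha2_exp p a c y \<le> min a c" "p ^ alpha2_exp p a c y dvd y" by auto
  show "k \<le> min a c \<Longrightarrow> p^k dvd y \<Longrightarrow> k \<le> alpha2_exp p a c y"
    unfolding alpha2_exp_def by (rule Greatest_le_nat[where b="min a c"]) auto
qed

lemma cotype_hnf_subgroup_prime_power:
  fixes p a c y :: nat
  assumes p: "prime p"
  defines "m \<equiv> alpha2_exp p a c y"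
  shows "cotype (hnf_subgroup (int p^a) (int p^c) (int y)) = (p^(a+c-m), p^m, 1)"
proof -
  have p1: "p > 1" using p prime_gt_1_nat by blast
  have m: "m \<le> min a c" "p^m dvd y" unfolding m_def by (rule alpha2_exp_le, rule alpha2_exp_dvd)
  have q: "quotient_iso (hnf_subgroup (int p^a) (int p^c) (int y)) (p^(a+c-m)) (p^m) 1"
  proof (cases "m = c")
    case True
    obtain t where "y = p^c * t" using m(2) True by (auto elim: dvdE)
    then show ?thesis
      using quotient_iso_hnf_subgroup_dvd[of "p^c" "p^a" "int t"] True p1 by simp
  next
    case False
    obtain y1 where y1: "y = p^m * y1" using m(2) by (rule dvdE)
    have "coprime (p^(a-m)) y1"
    proof (cases "m = a")
      case False
      with \<open>m \<noteq> c\<close> m(1) have "Suc m \<le> min a c" by simp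
      then have "\<not> p^Suc m dvd y" using alpha2_exp_greatest[of "Suc m" a c p y] by (auto simp: m_def)
      then have "\<not> p dvd y1" using p1 unfolding y1 by (simp add: power_Suc2 mult.commute)
      then show ?thesis using p by (simp add: prime_imp_coprime)
    qed simp
    then have "gcd (int (p^(a-m))) (int y1) = 1"
      by (metis coprime_iff_gcd_eq_1 gcd_int_int_eq of_nat_1)
    then obtain s t where "s * int (p^(a-m)) + t * int y1 = 1" using bezout_int by metis
    from quotient_iso_hnf_subgroup_coprime[OF _ _ this, of "p^m" "p^(c-m)"]
    show ?thesis using p1 m(1) y1 by (simp add: power_add[symmetric])
  qed
  have pos: "p^(a+c-m) > 0" "p^m > 0" using p1 by simp_all
  have "p^m dvd p^(a+c-m)" using m(1) by (intro le_imp_power_dvd) linarith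
  then show ?thesis
    using cotype_eqI[OF additive_subgroup_hnf_subgroup _ q pos] p1 by (simp add: rone_def hnf_subgroup_def)
qed

definition hnf_params :: "nat \<Rightarrow> (nat \<times> nat \<times> nat) set" where
  "hnf_params p = {(a,c,y). a \<le> 2*c \<and> y < p^a}"

definition subring_of_params :: "nat \<Rightarrow> nat \<times> nat \<times> nat \<Rightarrow> relt set" where
  "subring_of_params p = (\<lambda>(a,c,y). hnf_subgroup (int p^a) (int p^c) (int y))"

lemma hnf_subgroup_inject:
  assumes "x > 0" "x' > 0" "z > 0" "z' > 0" "0 \<le> y" "y < x" "0 \<le> y'" "y' < x'"
    and eq: "hnf_subgroup x z y = hnf_subgroup x' z' y'"
  shows "x = x'" "z = z'" "y = y'"
proof -
  have mem: "(y, z, 0) \<in> hnf_subgroup x z y" "(x, 0, 0) \<in> hnf_subgroup x z y"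
    "(y', z', 0) \<in> hnf_subgroup x' z' y'" "(x', 0, 0) \<in> hnf_subgroup x' z' y'"
    using assms(3,4) by (simp_all add: hnf_subgroup_def)
  from mem(1,2) have "z' dvd z" "x' dvd x" unfolding eq by (simp_all add: hnf_subgroup_def)
  moreover from mem(3,4) have "z dvd z'" "x dvd x'" unfolding eq[symmetric] by (simp_all add: hnf_subgroup_def)
  ultimately show xx: "x = x'" and zz: "z = z'" using assms(1-4) by (simp_all add: zdvd_antisym_nonneg)
  have "(y, z, 0) \<in> hnf_subgroup x' z' y'" using mem(1) unfolding eq .
  then have "x dvd y - y'" using assms(3) unfolding xx zz by (simp add: hnf_subgroup_def)
  then have "y mod x = y' mod x" by (simp add: mod_eq_dvd_iff)
  then show "y = y'" using assms xx by simp
qed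

lemma inj_on_subring_of_params:
  assumes "p > 1"
  shows "inj_on (subring_of_params p) (hnf_params p)"
proof (rule inj_onI)
  fix d d' assume "d \<in> hnf_params p" "d' \<in> hnf_params p"
    and eq: "subring_of_params p d = subring_of_params p d'"
  moreover obtain a c y a' c' y' where "d = (a,c,y)" "d' = (a',c',y')" by (cases d, cases d')
  ultimately have "int p^a = int p^a'" "int p^c = int p^c'" "int y = int y'"
    using hnf_subgroup_inject[of "int p^a" "int p^a'" "int p^c" "int p^c'" "int y" "int y'"] assms
    by (simp_all add: hnf_params_def subring_of_params_def flip: of_nat_power)
  then show "d = d'" using assms \<open>d = (a,c,y)\<close> \<open>d' = (a',c',y')\<close>
    by (simp add: power_inject_exp flip: of_nat_power)
qed

lemma subring_of_params_image:
  assumes p: "prime p"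
  shows "subring_of_params p ` hnf_params p = p_subrings p"
proof -
  have p1: "p > 1" using p prime_gt_1_nat by blast
  show ?thesis
  proof (intro set_eqI iffI)
    fix S
    assume "S \<in> subring_of_params p ` hnf_params p"
    then obtain a c y where ac: "a \<le> 2*c" "y < p^a" and S: "S = hnf_subgroup (int p^a) (int p^c) (int y)"
      by (auto simp: hnf_params_def subring_of_params_def)
    have pos: "int p^a > 0" "int p^c > 0" using p1 by simp_all
    have "p^a dvd (p^c)^2" using ac(1) by (simp add: le_imp_power_dvd flip: power_mult)
    then have "int p^a dvd (int p^c)^2" by (metis of_nat_dvd_iff of_nat_power)
    then have "is_subring S" using is_subring_hnf_subgroup[OF pos] S by simp
    moreover have "index S = p^(a+c)" using index_hnf_subgroup(2)[OF pos, of "int y"] S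
      by (simp add: power_add nat_mult_distrib nat_power_eq)
    ultimately show "S \<in> p_subrings p" unfolding p_subrings_def by blast
  next
    fix S
    assume "S \<in> p_subrings p"
    then obtain k where R: "is_subring S" and k: "index S = p^k" unfolding p_subrings_def by auto
    obtain x z y where h: "x > 0" "z > 0" "0 \<le> y" "y < x" "x dvd z^2" and S: "S = hnf_subgroup x z y"
      using subring_eq_hnf_subgroup[OF R] by blast
    have "nat x * nat z = p^k" using index_hnf_subgroup(2)[OF h(1,2), of y] h(1,2) S k
      by (simp add: nat_mult_distrib)
    then have "nat x dvd p^k" "nat z dvd p^k" by (metis dvd_triv_left dvd_triv_right)+
    then obtain a c where "nat x = p^a" "nat z = p^c" using divides_primepow_nat[OF p] by blast
    then have xa: "x = int p^a" and zc: "z = int p^c" using h(1,2) by (metis of_nat_power int_nat_eq less_le)+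
    have "p^a dvd p^(2*c)" using h(5) unfolding xa zc by (metis of_nat_dvd_iff of_nat_power power_mult mult.commute)
    then have "a \<le> 2*c" using p1 by (simp add: power_dvd_imp_le)
    moreover have "nat y < p^a" using h(3,4) xa by (metis nat_less_iff of_nat_power)
    ultimately have "(a, c, nat y) \<in> hnf_params p" by (simp add: hnf_params_def)
    moreover have "subring_of_params p (a, c, nat y) = S" using h(3) S xa zc by (simp add: subring_of_params_def)
    ultimately show "S \<in> subring_of_params p ` hnf_params p" by (metis image_eqI)
  qed
qed

lemma sums_indicator_scaleR_disjoint_family:
  fixes k :: "nat \<Rightarrow> 'b::real_normed_vector"
  assumes "disjoint_family A" "w \<in> A i"
  shows "(\<lambda>j. indicator (A j) w *\<^sub>R k j) sums k i"
proof -
  have "w \<notin> A j" if "j \<noteq> i" for j using that assms unfolding disjoint_family_on_def by blast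
  then have "(\<lambda>j. indicator (A j) w *\<^sub>R k j) = (\<lambda>j. if j = i then k j else 0)"
    using assms(2) by (auto simp: fun_eq_iff)
  then show ?thesis by (simp add: sums_single)
qed

lemma
  fixes A :: "nat \<Rightarrow> 'a set" and k :: "nat \<Rightarrow> 'b::{banach, second_countable_topology}"
  assumes M: "finite_measure M" and A: "\<And>i. A i \<in> sets M" "disjoint_family A"
    and f_on: "\<And>i w. w \<in> A i \<Longrightarrow> f w = k i"
    and f_off: "\<And>w. w \<in> space M \<Longrightarrow> (\<And>i. w \<notin> A i) \<Longrightarrow> f w = 0"
    and summable: "summable (\<lambda>i. measure M (A i) * norm (k i))"
  shows integrable_piecewise_constant: "integrable M f"
    and sums_integral_piecewise_constant: "(\<lambda>i. measure M (A i) *\<^sub>R k i) sums integral\<^sup>L M f"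
proof -
  define g where "g i w = indicator (A i) w *\<^sub>R k i" for i w
  have fin: "emeasure M (A i) \<noteq> \<infinity>" for i
    using finite_measure.emeasure_finite[OF M] by (simp add: infinity_ennreal_def)
  have int_g: "integrable M (g i)" for i
    unfolding g_def using A(1) fin by (simp add: less_top)
  have integral_g: "integral\<^sup>L M (g i) = measure M (A i) *\<^sub>R k i" for i
    unfolding g_def using set_integral_const[OF A(1) fin] by (simp add: set_lebesgue_integral_def)
  have norm_g: "(\<lambda>j. norm (g j w)) = (\<lambda>j. indicator (A j) w *\<^sub>R norm (k j))" for w
    by (simp add: g_def fun_eq_iff indicator_def)
  have integral_norm_g: "(\<integral>w. norm (g i w) \<partial>M) = measure M (A i) * norm (k i)" for i
    using set_integral_const[OF A(1) fin, where c = "norm (k i)"]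
    by (simp add: fun_cong[OF norm_g] set_lebesgue_integral_def)
  have g_pointwise: "summable (\<lambda>j. norm (g j w)) \<and> f w = (\<Sum>j. g j w)" if "w \<in> space M" for w
  proof (cases "\<exists>i. w \<in> A i")
    case True
    then obtain i where i: "w \<in> A i" ..
    have "(\<lambda>j. g j w) sums k i"
      unfolding g_def by (rule sums_indicator_scaleR_disjoint_family[OF A(2) i])
    moreover have "(\<lambda>j. norm (g j w)) sums norm (k i)"
      unfolding norm_g by (rule sums_indicator_scaleR_disjoint_family[OF A(2) i])
    ultimately show ?thesis using f_on[OF i] by (simp add: sums_iff)
  next
    case False
    then show ?thesis using f_off[OF that] by (simp add: g_def)
  qed
  have int_sum: "integrable M (\<lambda>w. \<Sum>i. g i w)"
    and sums_sum: "(\<lambda>i. integral\<^sup>L M (g i)) sums (\<integral>w. (\<Sum>i. g i w) \<partial>M)"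
    using integrable_suminf[OF int_g] sums_integral[OF int_g] g_pointwise summable
    by (simp_all add: AE_I2 integral_norm_g)
  have "integrable M f \<longleftrightarrow> integrable M (\<lambda>w. \<Sum>i. g i w)"
    by (rule Bochner_Integration.integrable_cong) (simp_all add: g_pointwise)
  then show "integrable M f" using int_sum by simp
  have "integral\<^sup>L M f = (\<integral>w. (\<Sum>i. g i w) \<partial>M)"
    by (rule Bochner_Integration.integral_cong) (simp_all add: g_pointwise)
  then show "(\<lambda>i. measure M (A i) *\<^sub>R k i) sums integral\<^sup>L M f"
    using sums_sum by (simp add: integral_g)
qed

lemma product_prob_space_digits:
  fixes p :: nat
  assumes "p > 0"
  shows "product_prob_space (\<lambda>_. uniform_count_measure {0..<p})"
proof -
  have "prob_space (uniform_count_measure {0..<p})"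
    by (rule prob_space_uniform_count_measure) (use assms in auto)
  then show ?thesis
    by (simp add: product_prob_space_def product_prob_space_axioms_def product_sigma_finite_def
        prob_space_def finite_measure_def)
qed

lemma prob_space_Zp_haar: "p > 0 \<Longrightarrow> prob_space (Zp_haar p)"
  unfolding Zp_haar_def by (intro prob_space_PiM prob_space_uniform_count_measure) auto

lemma prob_space_Zp3_haar: "p > 0 \<Longrightarrow> prob_space (Zp3_haar p)"
  unfolding Zp3_haar_def by (intro prob_space_pair prob_space_Zp_haar)

lemma space_Zp_haar: "space (Zp_haar p) = (\<Pi>\<^sub>E i\<in>UNIV. {0..<p})"
  unfolding Zp_haar_def by (simp add: space_PiM space_uniform_count_measure)

lemma Zp_haar_digit_set:
  fixes p :: nat
  assumes p: "p > 0" and I: "finite I" and A: "\<And>i. i \<in> I \<Longrightarrow> A i \<subseteq> {0..<p}"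
  shows "{x \<in> space (Zp_haar p). \<forall>i\<in>I. x i \<in> A i} \<in> sets (Zp_haar p)"
    and "emeasure (Zp_haar p) {x \<in> space (Zp_haar p). \<forall>i\<in>I. x i \<in> A i}
           = ennreal (\<Prod>i\<in>I. card (A i) / p)"
proof -
  interpret P: product_prob_space "\<lambda>_. uniform_count_measure {0..<p}" UNIV
    using product_prob_space_digits[OF p] .
  have sets: "A i \<in> sets (uniform_count_measure {0..<p})" if "i \<in> I" for i
    using A[OF that] by (simp add: sets_uniform_count_measure)
  have "{x \<in> space (Zp_haar p). \<forall>i\<in>I. x i \<in> A i}
      = prod_emb UNIV (\<lambda>_. uniform_count_measure {0..<p}) I (\<Pi>\<^sub>E i\<in>I. A i)"
    unfolding prod_emb_def Zp_haar_def by (auto simp: space_PiM space_uniform_count_measure)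
  then show "{x \<in> space (Zp_haar p). \<forall>i\<in>I. x i \<in> A i} \<in> sets (Zp_haar p)"
    unfolding Zp_haar_def using I sets by (simp add: sets_PiM_I)
  have "emeasure (Zp_haar p) {x \<in> space (Zp_haar p). \<forall>i\<in>I. x i \<in> A i}
      = (\<Prod>i\<in>I. emeasure (uniform_count_measure {0..<p}) (A i))"
    unfolding Zp_haar_def by (rule P.emeasure_PiM_Collect) (use I sets in auto)
  also have "\<dots> = (\<Prod>i\<in>I. ennreal (card (A i) / p))"
    using A by (intro prod.cong refl) (simp add: emeasure_uniform_count_measure finite_subset
        ennreal_of_nat_eq_real_of_nat divide_ennreal p)
  also have "\<dots> = ennreal (\<Prod>i\<in>I. card (A i) / p)" by (rule prod_ennreal) simp
  finally show "emeasure (Zp_haar p) {x \<in> space (Zp_haar p). \<forall>i\<in>I. x i \<in> A i}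
      = ennreal (\<Prod>i\<in>I. card (A i) / p)" .
qed

definition Zp_sphere :: "nat \<Rightarrow> nat \<Rightarrow> (nat \<Rightarrow> nat) set" where
  "Zp_sphere p a = {x \<in> space (Zp_haar p). \<forall>i\<in>{..a}. x i \<in> (if i < a then {0} else {1..<p})}"

definition Zp_cylinder :: "nat \<Rightarrow> nat \<Rightarrow> nat \<Rightarrow> (nat \<Rightarrow> nat) set" where
  "Zp_cylinder p a y = {x \<in> space (Zp_haar p). \<forall>i\<in>{..<a}. x i \<in> {y div p^i mod p}}"

lemma
  assumes "p > 0"
  shows sets_Zp_sphere: "Zp_sphere p a \<in> sets (Zp_haar p)"
    and emeasure_Zp_sphere: "emeasure (Zp_haar p) (Zp_sphere p a) = ennreal ((1/p)^a * (1 - 1/p))"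
proof -
  have card: "card (if i < a then {0} else {1..<p}) / p = (if i < a then 1/p else 1 - 1/p)" for i
    using assms by (simp add: field_simps of_nat_diff)
  show "Zp_sphere p a \<in> sets (Zp_haar p)"
    unfolding Zp_sphere_def by (rule Zp_haar_digit_set) (use assms in auto)
  have "(\<Prod>i\<le>a. if i < a then 1/p else 1 - 1/p) = (1/p)^a * (1 - 1/p :: real)"
    by (simp add: lessThan_Suc_atMost[symmetric] del: lessThan_Suc_atMost)
  then show "emeasure (Zp_haar p) (Zp_sphere p a) = ennreal ((1/p)^a * (1 - 1/p))"
    unfolding Zp_sphere_def card[symmetric] by (subst Zp_haar_digit_set(2)) (use assms in auto)
qed

lemma
  assumes "p > 0"
  shows sets_Zp_cylinder: "Zp_cylinder p a y \<in> sets (Zp_haar p)"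
    and emeasure_Zp_cylinder: "emeasure (Zp_haar p) (Zp_cylinder p a y) = ennreal ((1/p)^a)"
proof -
  have "{y div p^i mod p} \<subseteq> {0..<p}" for i using assms by simp
  then show "Zp_cylinder p a y \<in> sets (Zp_haar p)"
    and "emeasure (Zp_haar p) (Zp_cylinder p a y) = ennreal ((1/p)^a)"
    unfolding Zp_cylinder_def using Zp_haar_digit_set[OF assms, of "{..<a}" "\<lambda>i. {y div p^i mod p}"]
    by simp_all
qed

lemma mem_Zp_sphere_iff:
  "x \<in> Zp_sphere p a \<longleftrightarrow> x \<in> space (Zp_haar p) \<and> (\<forall>i<a. x i = 0) \<and> x a \<noteq> 0"
  unfolding Zp_sphere_def space_Zp_haar by (auto simp: PiE_iff)

lemma Zp_cylinder_digit: "x \<in> Zp_cylinder p a y \<Longrightarrow> i < a \<Longrightarrow> x i = y div p^i mod p"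
  by (auto simp: Zp_cylinder_def)

lemma padic_abs_eq:
  assumes "\<forall>i<a. x i = 0" "x a \<noteq> 0"
  shows "padic_abs p x = real p powr (- real a)"
proof -
  have "(LEAST i. x i \<noteq> 0) = a"
    by (rule Least_equality) (use assms in \<open>auto simp: not_less[symmetric]\<close>)
  then show ?thesis using assms by (auto simp: padic_abs_def)
qed

lemma padic_abs_le:
  assumes "p > 1" "\<forall>i<a. x i = 0"
  shows "padic_abs p x \<le> real p powr (- real a)"
proof (cases "\<exists>i. x i \<noteq> 0")
  case True
  then have "x (LEAST i. x i \<noteq> 0) \<noteq> 0" by (rule LeastI_ex)
  then have "a \<le> (LEAST i. x i \<noteq> 0)" using assms(2) by (meson not_le)
  then show ?thesis using True assms(1) by (simp add: padic_abs_def)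
qed (simp add: padic_abs_def)

lemma padic_abs_Zp_sphere: "x \<in> Zp_sphere p a \<Longrightarrow> padic_abs p x = real p powr (- real a)"
  by (simp add: mem_Zp_sphere_iff padic_abs_eq)

lemma max_padic_abs_Zp_cylinder:
  assumes p: "p > 1" and x: "x \<in> Zp_cylinder p a y"
  shows "max (real p powr (- real a)) (max (padic_abs p x) (real p powr (- real c)))
         = real p powr (- real (alpha2_exp p a c y))"
proof -
  define m where "m = alpha2_exp p a c y"
  have m: "m \<le> min a c" "p^m dvd y" unfolding m_def by (rule alpha2_exp_le, rule alpha2_exp_dvd)
  have low: "\<forall>i<m. x i = 0"
    using m power_dvd_iff_digits_zero[OF p, of m y] Zp_cylinder_digit[OF x] by auto
  have mono: "real p powr (- real k) \<le> real p powr (- real m)" if "m \<le> k" for k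
    using p that by (intro powr_mono) auto
  show ?thesis
  proof (cases "m < min a c")
    case True
    then have "\<not> p^Suc m dvd y" using alpha2_exp_greatest[of "Suc m" a c p y] by (auto simp: m_def)
    moreover have "\<forall>i<m. y div p^i mod p = 0" using m(2) power_dvd_iff_digits_zero[OF p] by blast
    ultimately have "y div p^m mod p \<noteq> 0"
      using power_dvd_iff_digits_zero[OF p, of "Suc m" y] by (metis less_Suc_eq)
    then have "x m \<noteq> 0" using Zp_cylinder_digit[OF x, of m] True by simp
    then have "padic_abs p x = real p powr (- real m)" using low by (rule padic_abs_eq[rotated])
    then show ?thesis using True mono[of a] mono[of c] by (simp add: m_def)
  next
    case False
    then have "m = a \<or> m = c" using m(1) by linarith
    then show ?thesis using padic_abs_le[OF p low] mono[of a] mono[of c] m(1)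
      by (auto simp: max_def m_def)
  qed
qed

section \<open>Cells\<close>

lemma complex_of_real_powr:
  assumes "x > 0"
  shows "complex_of_real x powr w = exp (w * of_real (ln x))"
  using assms by (simp add: powr_def Ln_of_real)

definition hnf_zeta_term :: "nat \<Rightarrow> complex \<Rightarrow> complex \<Rightarrow> nat \<times> nat \<times> nat \<Rightarrow> complex" where
  "hnf_zeta_term p s1 s2 = (\<lambda>(a,c,y). let m = alpha2_exp p a c y in
     of_nat (p^(a+c-m)) powr (-s1) * of_nat (p^m) powr (-s2))"

lemma zeta_term_subring_of_params:
  assumes "prime p"
  shows "zeta_term (subring_of_params p d) s1 s2 = hnf_zeta_term p s1 s2 d"
  using cotype_hnf_subgroup_prime_power[OF assms]
  by (simp add: zeta_term_def alpha1_def alpha2_def subring_of_params_def hnf_zeta_term_def Let_def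
      split: prod.split)

definition cell :: "nat \<Rightarrow> nat \<times> nat \<times> nat \<Rightarrow> ((nat \<Rightarrow> nat) \<times> (nat \<Rightarrow> nat) \<times> (nat \<Rightarrow> nat)) set" where
  "cell p = (\<lambda>(a,c,y). Zp_sphere p a \<times> Zp_cylinder p a y \<times> Zp_sphere p c)"

definition cell_value :: "nat \<Rightarrow> complex \<Rightarrow> complex \<Rightarrow> nat \<times> nat \<times> nat \<Rightarrow> complex" where
  "cell_value p s1 s2 = (\<lambda>(a,c,y). of_real (real p ^ (2*a+c)) * hnf_zeta_term p s1 s2 (a,c,y))"

lemma integrand_cell:
  assumes p: "p > 1" and d: "d \<in> hnf_params p" and w: "w \<in> cell p d"
  shows "integrand p s1 s2 w = cell_value p s1 s2 d"
proof -
  obtain a c y where d_eq: "d = (a,c,y)" by (cases d)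
  obtain x1 x2 x3 where wx: "w = (x1,x2,x3)" by (cases w)
  have x: "x1 \<in> Zp_sphere p a" "x2 \<in> Zp_cylinder p a y" "x3 \<in> Zp_sphere p c"
    using w by (auto simp: wx d_eq cell_def)
  define m where "m = alpha2_exp p a c y"
  have "m \<le> min a c" unfolding m_def by (rule alpha2_exp_le)
  define L where "L = complex_of_real (ln (real p))"
  have pow: "complex_of_real (real p powr (- real k)) powr s = exp (- s * (of_nat k * L))" for k s
    using p by (simp add: complex_of_real_powr ln_powr L_def)
  have pow_nat: "complex_of_nat (p^k) powr s = exp (s * (of_nat k * L))" for k s
    using complex_of_real_powr[of "real p ^ k" s] p by (simp add: ln_realpow L_def)
  have real_pow: "complex_of_real (real p ^ k) = exp (of_nat k * L)" for k
    using p by (simp add: exp_of_nat_mult L_def exp_of_real)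
  have "(real p powr (- real c))^2 = real p powr (- real (2*c))"
    by (simp add: power2_eq_square powr_add[symmetric])
  also have "\<dots> \<le> real p powr (- real a)"
    using p d by (intro powr_mono) (auto simp: d_eq hnf_params_def)
  finally have cond: "(real p powr (- real c))^2 \<le> real p powr (- real a)" .
  have "integrand p s1 s2 w =
     exp (- (s1 - 2) * (of_nat a * L)) * exp (- (s1 - 1) * (of_nat c * L)) * exp (- (s2 - s1) * (of_nat m * L))"
    unfolding integrand_def wx prod.case padic_abs_Zp_sphere[OF x(1)] padic_abs_Zp_sphere[OF x(3)]
      max_padic_abs_Zp_cylinder[OF p x(2)] m_def[symmetric] pow using cond by simp
  also have "\<dots> = exp (of_nat (2*a+c) * L + (-s1) * (of_nat (a+c-m) * L) + (-s2) * (of_nat m * L))"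
    unfolding exp_add[symmetric] using \<open>m \<le> min a c\<close>
    by (intro arg_cong[where f=exp]) (simp add: of_nat_diff algebra_simps)
  also have "\<dots> = cell_value p s1 s2 d"
    unfolding d_eq cell_value_def hnf_zeta_term_def Let_def prod.case m_def[symmetric] pow_nat
      real_pow exp_add
    by (simp only: mult.assoc)
  finally show ?thesis .
qed

lemma cells_disjoint:
  assumes p: "p > 1" and d: "d \<in> hnf_params p" "d' \<in> hnf_params p"
    and w: "w \<in> cell p d" "w \<in> cell p d'"
  shows "d = d'"
proof -
  obtain a c y a' c' y' where dd: "d = (a,c,y)" "d' = (a',c',y')" by (cases d, cases d')
  obtain x1 x2 x3 where wx: "w = (x1,x2,x3)" by (cases w)
  have x: "x1 \<in> Zp_sphere p a" "x2 \<in> Zp_cylinder p a y" "x3 \<in> Zp_sphere p c"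
    "x1 \<in> Zp_sphere p a'" "x2 \<in> Zp_cylinder p a' y'" "x3 \<in> Zp_sphere p c'"
    using w by (auto simp: wx dd cell_def)
  have sphere_unique: "k = k'" if "x \<in> Zp_sphere p k" "x \<in> Zp_sphere p k'" for x k k'
  proof (rule ccontr)
    assume "k \<noteq> k'"
    then consider "k < k'" | "k' < k" by linarith
    then show False using that by cases (auto simp: mem_Zp_sphere_iff)
  qed
  have aa: "a = a'" and cc: "c = c'" using sphere_unique x by blast+
  have "y < p^a" "y' < p^a" using d aa by (simp_all add: dd hnf_params_def)
  have "y = (\<Sum>i<a. (y div p^i mod p) * p^i)" using sum_digits_eq[OF p \<open>y < p^a\<close>] by simp
  also have "\<dots> = (\<Sum>i<a. (y' div p^i mod p) * p^i)"
    using Zp_cylinder_digit[OF x(2)] Zp_cylinder_digit[OF x(5)] aa by (intro sum.cong) auto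
  also have "\<dots> = y'" using sum_digits_eq[OF p \<open>y' < p^a\<close>] .
  finally have "y = y'" .
  then show ?thesis using dd aa cc by simp
qed

lemma integrand_support_cell:
  assumes p: "p > 1" and w: "w \<in> space (Zp3_haar p)" and nz: "integrand p s1 s2 w \<noteq> 0"
  obtains d where "d \<in> hnf_params p" "w \<in> cell p d"
proof -
  obtain x1 x2 x3 where wx: "w = (x1,x2,x3)" by (cases w)
  have sp: "x1 \<in> space (Zp_haar p)" "x2 \<in> space (Zp_haar p)" "x3 \<in> space (Zp_haar p)"
    using w by (auto simp: wx Zp3_haar_def space_pair_measure)
  have cond: "(padic_abs p x3)^2 \<le> padic_abs p x1"
    and nz13: "padic_abs p x1 \<noteq> 0" "padic_abs p x3 \<noteq> 0"
    using nz unfolding integrand_def wx by (auto split: if_splits)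
  have sphere: "x \<in> Zp_sphere p (LEAST i. x i \<noteq> 0)"
    if "x \<in> space (Zp_haar p)" "padic_abs p x \<noteq> 0" for x
  proof -
    have "\<exists>i. x i \<noteq> 0" using that(2) by (auto simp: padic_abs_def split: if_splits)
    then show ?thesis using that(1) unfolding mem_Zp_sphere_iff
      by (auto dest: not_less_Least intro: LeastI_ex)
  qed
  define a where "a = (LEAST i. x1 i \<noteq> 0)"
  define c where "c = (LEAST i. x3 i \<noteq> 0)"
  have x1: "x1 \<in> Zp_sphere p a" and x3: "x3 \<in> Zp_sphere p c"
    unfolding a_def c_def using sphere sp nz13 by blast+
  have "real p powr (- real (2*c)) \<le> real p powr (- real a)"
    using cond unfolding padic_abs_Zp_sphere[OF x1] padic_abs_Zp_sphere[OF x3]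
    by (simp add: power2_eq_square powr_add[symmetric])
  then have "a \<le> 2*c" using p by (simp add: powr_le_cancel_iff)
  define y where "y = (\<Sum>i<a. x2 i * p^i)"
  have "\<forall>i<a. x2 i < p" using sp(2) by (auto simp: space_Zp_haar PiE_iff)
  then have y: "y < p^a \<and> (\<forall>j<a. y div p^j mod p = x2 j)"
    unfolding y_def by (intro digits_of_digit_sum) auto
  then have "x2 \<in> Zp_cylinder p a y" using sp(2) by (auto simp: Zp_cylinder_def)
  then have "w \<in> cell p (a,c,y)" using x1 x3 by (simp add: wx cell_def)
  moreover have "(a,c,y) \<in> hnf_params p" using \<open>a \<le> 2*c\<close> y by (simp add: hnf_params_def)
  ultimately show ?thesis using that by blast
qed

lemma sets_cell: "p > 0 \<Longrightarrow> cell p d \<in> sets (Zp3_haar p)"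
  unfolding cell_def Zp3_haar_def
  by (auto intro!: pair_measureI sets_Zp_sphere sets_Zp_cylinder split: prod.splits)

lemma measure_cell:
  assumes p: "p > 1"
  shows "measure (Zp3_haar p) (cell p (a,c,y)) = (1 - 1/p)^2 / real p ^ (2*a+c)"
proof -
  have p0: "p > 0" using p by simp
  have ps: "prob_space (Zp_haar p)" using prob_space_Zp_haar[OF p0] .
  note sf = prob_space_imp_sigma_finite[OF ps] prob_space_imp_sigma_finite[OF prob_space_pair[OF ps ps]]
  have "emeasure (Zp3_haar p) (cell p (a,c,y)) =
      emeasure (Zp_haar p) (Zp_sphere p a) * (emeasure (Zp_haar p) (Zp_cylinder p a y)
        * emeasure (Zp_haar p) (Zp_sphere p c))"
    unfolding Zp3_haar_def cell_def prod.case
    using sigma_finite_measure.emeasure_pair_measure_Times[OF sf(2) sets_Zp_sphere[OF p0]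
        pair_measureI[OF sets_Zp_cylinder[OF p0] sets_Zp_sphere[OF p0]]]
      sigma_finite_measure.emeasure_pair_measure_Times[OF sf(1) sets_Zp_cylinder[OF p0] sets_Zp_sphere[OF p0]]
    by simp
  also have "\<dots> = ennreal ((1/p)^a * (1 - 1/p) * ((1/p)^a * ((1/p)^c * (1 - 1/p))))"
    using p by (simp add: emeasure_Zp_sphere emeasure_Zp_cylinder p0 ennreal_mult[symmetric])
  finally have "measure (Zp3_haar p) (cell p (a,c,y))
      = (1/p)^a * (1 - 1/p) * ((1/p)^a * ((1/p)^c * (1 - 1/p)))"
    using p by (simp add: measure_def)
  also have "\<dots> = (1 - 1/p)^2 * ((1/p)^a * (1/p)^a * (1/p)^c)"
    by (simp only: power2_eq_square mult_ac)
  also have "(1/p)^a * (1/p)^a * (1/p)^c = 1 / real p ^ (2*a+c)"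
    by (simp add: power_add mult_2 power_one_over)
  finally show ?thesis by simp
qed

lemma
  assumes p: "p > 1"
  shows measure_cell_scaleR_cell_value: "measure (Zp3_haar p) (cell p d) *\<^sub>R cell_value p s1 s2 d
      = of_real ((1 - 1/p)^2) * hnf_zeta_term p s1 s2 d"
    and measure_cell_norm_cell_value: "measure (Zp3_haar p) (cell p d) * norm (cell_value p s1 s2 d)
      = (1 - 1/p)^2 * norm (hnf_zeta_term p s1 s2 d)"
  using p by (cases d rule: prod_cases3; simp add: measure_cell cell_value_def scaleR_conv_of_real
      norm_mult norm_power)+

section \<open>Summation over the cells\<close>

lemma norm_hnf_zeta_term_le:
  assumes p: "p > 1" and s: "Re s1 \<ge> 2" "Re s2 \<ge> 2"
  shows "norm (hnf_zeta_term p s1 s2 (a,c,y)) \<le> (1 / real p) ^ (2*a + 2*c)"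
proof -
  have norm_pow: "norm (complex_of_nat (p^k) powr (-s)) \<le> (1 / real p) ^ (2*k)" if "Re s \<ge> 2" for k s
  proof -
    have "norm (complex_of_nat (p^k) powr (-s)) = real (p^k) powr (- Re s)"
      using norm_powr_real_powr[of "of_nat (p^k)" "-s"] by simp
    also have "\<dots> \<le> real (p^k) powr (- 2)"
      using that p by (intro powr_mono) (auto simp: one_le_power)
    also have "\<dots> = (1 / real p) ^ (2*k)"
      using p by (simp add: powr_minus power_one_over inverse_eq_divide flip: power_mult)
    finally show ?thesis .
  qed
  define m where "m = alpha2_exp p a c y"
  have "m \<le> min a c" unfolding m_def by (rule alpha2_exp_le)
  have "norm (hnf_zeta_term p s1 s2 (a,c,y)) \<le> (1 / real p) ^ (2*(a+c-m)) * (1 / real p) ^ (2*m)"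
    unfolding hnf_zeta_term_def Let_def prod.case m_def[symmetric] norm_mult
    by (intro mult_mono norm_pow s) auto
  also have "\<dots> = (1 / real p) ^ (2*(a+c-m) + 2*m)" by (simp add: power_add)
  also have "2*(a+c-m) + 2*m = 2*a + 2*c" using \<open>m \<le> min a c\<close> by arith
  finally show ?thesis .
qed

lemma sum_power_le_inverse:
  fixes q :: real
  assumes "0 \<le> q" "q < 1"
  shows "(\<Sum>i\<le>N. q^i) \<le> 1 / (1 - q)"
proof -
  have "(\<Sum>i\<le>N. q^i) \<le> (\<Sum>i. q^i)"
    using assms by (intro sum_le_suminf summable_geometric) auto
  then show ?thesis using assms by (simp add: suminf_geometric)
qed

lemma sum_hnf_box_le:
  assumes p: "p > 1"
  shows "(\<Sum>(a,c,y)\<in>Sigma {..N} (\<lambda>a. Sigma {..N} (\<lambda>c. {..<p^a})). (1 / real p) ^ (2*a + 2*c)) \<le> 4"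
proof -
  define q where "q = 1 / real p"
  have q: "0 \<le> q" "q \<le> 1/2" using p by (auto simp: q_def field_simps)
  have "(\<Sum>(a,c,y)\<in>Sigma {..N} (\<lambda>a. Sigma {..N} (\<lambda>c. {..<p^a})). q ^ (2*a + 2*c))
      = (\<Sum>a\<le>N. \<Sum>(c,y)\<in>Sigma {..N} (\<lambda>c. {..<p^a}). q ^ (2*a + 2*c))"
    by (rule sum.Sigma[symmetric]) auto
  also have "\<dots> = (\<Sum>a\<le>N. \<Sum>c\<le>N. \<Sum>y<p^a. q ^ (2*a + 2*c))"
    by (intro sum.cong refl sum.Sigma[symmetric]) auto
  also have "\<dots> = (\<Sum>a\<le>N. \<Sum>c\<le>N. q^a * (q^2)^c)"
  proof (intro sum.cong refl)
    fix a c
    have "(\<Sum>y<p^a. q ^ (2*a + 2*c)) = (real p * q^2)^a * (q^2)^c"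
      by (simp add: power_add power_mult power_mult_distrib)
    moreover have "real p * q^2 = q" using p by (simp add: q_def power2_eq_square)
    ultimately show "(\<Sum>y<p^a. q ^ (2*a + 2*c)) = q^a * (q^2)^c" by simp
  qed
  also have "\<dots> = (\<Sum>a\<le>N. q^a) * (\<Sum>c\<le>N. (q^2)^c)"
    by (simp add: sum_product)
  also have "\<dots> \<le> (1 / (1 - q)) * (1 / (1 - q^2))"
    using q by (intro mult_mono sum_power_le_inverse sum_nonneg) (auto simp: abs_square_less_1)
  also have "\<dots> \<le> 2 * 2"
  proof -
    have inv: "1 / (1 - t) \<le> 2" if "t \<le> 1/2" for t :: real using that by (simp add: field_simps)
    have "q * q \<le> q * 1" using q by (intro mult_left_mono) auto
    then have "q^2 \<le> 1/2" using q by (simp add: power2_eq_square)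
    then show ?thesis using q by (intro mult_mono inv) auto
  qed
  finally show ?thesis by (simp add: q_def)
qed

lemma summable_on_norm_hnf_zeta_term:
  assumes p: "p > 1" and s: "Re s1 \<ge> 2" "Re s2 \<ge> 2"
  shows "(\<lambda>d. norm (hnf_zeta_term p s1 s2 d)) summable_on hnf_params p"
proof (rule nonneg_bdd_above_summable_on)
  show "bdd_above (sum (\<lambda>d. norm (hnf_zeta_term p s1 s2 d)) ` {F. F \<subseteq> hnf_params p \<and> finite F})"
  proof (rule bdd_aboveI, safe)
    fix F assume F: "F \<subseteq> hnf_params p" "finite F"
    define N where "N = Max (insert 0 ((\<lambda>(a,c,y). a + c) ` F))"
    define B where "B = Sigma {..N} (\<lambda>a. Sigma {..N} (\<lambda>c. {..<p^a}))"
    have "F \<subseteq> B"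
    proof
      fix d assume d: "d \<in> F"
      obtain a c y where dd: "d = (a,c,y)" by (cases d)
      have "a + c \<le> N" unfolding N_def using F(2) d dd by (intro Max_ge) force+
      then show "d \<in> B" using d F(1) dd by (auto simp: B_def hnf_params_def)
    qed
    have "(\<Sum>d\<in>F. norm (hnf_zeta_term p s1 s2 d)) \<le> (\<Sum>(a,c,y)\<in>F. (1 / real p) ^ (2*a + 2*c))"
      by (intro sum_mono) (auto simp: norm_hnf_zeta_term_le[OF p s])
    also have "\<dots> \<le> (\<Sum>(a,c,y)\<in>B. (1 / real p) ^ (2*a + 2*c))"
      by (intro sum_mono2 \<open>F \<subseteq> B\<close>) (auto simp: B_def)
    also have "\<dots> \<le> 4" unfolding B_def by (rule sum_hnf_box_le[OF p])
    finally show "(\<Sum>d\<in>F. norm (hnf_zeta_term p s1 s2 d)) \<le> 4" .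
  qed
qed simp

lemma infinite_hnf_params: "infinite (hnf_params p)"
proof -
  have "inj (\<lambda>c::nat. (0::nat, c, 0::nat))" by (auto simp: inj_def)
  moreover have "range (\<lambda>c. (0::nat, c, 0::nat)) \<subseteq> hnf_params p" by (auto simp: hnf_params_def)
  ultimately show ?thesis using infinite_iff_countable_subset by blast
qed

lemma has_sum_zeta_term_p_subrings:
  assumes p: "prime p" and s: "Re s1 \<ge> 2" "Re s2 \<ge> 2"
  shows "((\<lambda>S. zeta_term S s1 s2) has_sum infsum (hnf_zeta_term p s1 s2) (hnf_params p)) (p_subrings p)"
proof -
  have p1: "p > 1" using p prime_gt_1_nat by blast
  have "hnf_zeta_term p s1 s2 summable_on hnf_params p"
    using summable_on_norm_hnf_zeta_term[OF p1 s] by (rule abs_summable_summable)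
  then have "(hnf_zeta_term p s1 s2 has_sum infsum (hnf_zeta_term p s1 s2) (hnf_params p)) (hnf_params p)"
    by (rule has_sum_infsum)
  then have "((\<lambda>S. zeta_term S s1 s2) \<circ> subring_of_params p has_sum
      infsum (hnf_zeta_term p s1 s2) (hnf_params p)) (hnf_params p)"
    by (rule has_sum_cong[THEN iffD2, rotated]) (simp add: zeta_term_subring_of_params[OF p])
  then show ?thesis
    unfolding subring_of_params_image[OF p, symmetric] has_sum_reindex[OF inj_on_subring_of_params[OF p1]] .
qed

lemma hnf_zeta_term_enumeration:
  assumes p: "p > 1" and s: "Re s1 \<ge> 2" "Re s2 \<ge> 2" and bij: "bij_betw e UNIV (hnf_params p)"
  shows "(\<lambda>i. hnf_zeta_term p s1 s2 (e i)) sums infsum (hnf_zeta_term p s1 s2) (hnf_params p)"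
    and "summable (\<lambda>i. norm (hnf_zeta_term p s1 s2 (e i)))"
proof -
  note norm_summable = summable_on_norm_hnf_zeta_term[OF p s]
  have "(hnf_zeta_term p s1 s2 has_sum infsum (hnf_zeta_term p s1 s2) (hnf_params p)) (hnf_params p)"
    using abs_summable_summable[OF norm_summable] by (rule has_sum_infsum)
  then show "(\<lambda>i. hnf_zeta_term p s1 s2 (e i)) sums infsum (hnf_zeta_term p s1 s2) (hnf_params p)"
    by (rule has_sum_imp_sums[OF has_sum_reindex_bij_betw[OF bij, THEN iffD2]])
  have "((\<lambda>d. norm (hnf_zeta_term p s1 s2 d)) has_sum
      infsum (\<lambda>d. norm (hnf_zeta_term p s1 s2 d)) (hnf_params p)) (hnf_params p)"
    using norm_summable by (rule has_sum_infsum)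
  then show "summable (\<lambda>i. norm (hnf_zeta_term p s1 s2 (e i)))"
    by (rule sums_summable[OF has_sum_imp_sums[OF has_sum_reindex_bij_betw[OF bij, THEN iffD2]]])
qed

lemma integral_integrand:
  assumes p: "prime p" and s: "Re s1 \<ge> 2" "Re s2 \<ge> 2"
  shows "integrable (Zp3_haar p) (integrand p s1 s2)"
    and "integral\<^sup>L (Zp3_haar p) (integrand p s1 s2)
           = of_real ((1 - 1/p)^2) * infsum (hnf_zeta_term p s1 s2) (hnf_params p)"
proof -
  have p1: "p > 1" using p prime_gt_1_nat by blast
  obtain e :: "nat \<Rightarrow> nat \<times> nat \<times> nat" where bij: "bij_betw e UNIV (hnf_params p)"
    using bij_betw_from_nat_into[OF countableI_type infinite_hnf_params[of p]] by blast
  have eD: "e i \<in> hnf_params p" for i using bij_betw_apply[OF bij] by simp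
  have "summable (\<lambda>i. (1 - 1/p)^2 * norm (hnf_zeta_term p s1 s2 (e i)))"
    using hnf_zeta_term_enumeration(2)[OF p1 s bij] by (rule summable_mult)
  then have summable: "summable (\<lambda>i. measure (Zp3_haar p) (cell p (e i)) * norm (cell_value p s1 s2 (e i)))"
    by (simp add: measure_cell_norm_cell_value[OF p1])
  have fm: "finite_measure (Zp3_haar p)"
    using prob_space_Zp3_haar[of p] p1 by (simp add: prob_space.finite_measure)
  have sets: "cell p (e i) \<in> sets (Zp3_haar p)" for i using p1 by (simp add: sets_cell)
  have disj: "disjoint_family (\<lambda>i. cell p (e i))"
    unfolding disjoint_family_on_def
  proof (intro ballI impI)
    fix i j :: nat
    assume "i \<noteq> j"
    then have "e i \<noteq> e j" using bij_betw_imp_inj_on[OF bij] by (auto simp: inj_on_def)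
    then show "cell p (e i) \<inter> cell p (e j) = {}" using cells_disjoint[OF p1 eD eD] by blast
  qed
  have off: "integrand p s1 s2 w = 0"
    if w: "w \<in> space (Zp3_haar p)" and not_in: "\<And>i. w \<notin> cell p (e i)" for w
  proof (rule ccontr)
    assume "integrand p s1 s2 w \<noteq> 0"
    then obtain d where d: "d \<in> hnf_params p" "w \<in> cell p d" by (rule integrand_support_cell[OF p1 w])
    have "d \<in> range e" using d(1) bij_betw_imp_surj_on[OF bij] by simp
    then obtain i where "d = e i" by blast
    then show False using d(2) not_in by blast
  qed
  note piecewise = integrable_piecewise_constant sums_integral_piecewise_constant
  note piecewise = piecewise[OF fm sets disj integrand_cell[OF p1 eD] off summable]
  show "integrable (Zp3_haar p) (integrand p s1 s2)" by (rule piecewise(1))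
  have "(\<lambda>i. of_real ((1 - 1/p)^2) * hnf_zeta_term p s1 s2 (e i))
      sums integral\<^sup>L (Zp3_haar p) (integrand p s1 s2)"
    using piecewise(2) by (simp add: measure_cell_scaleR_cell_value[OF p1])
  moreover have "(\<lambda>i. of_real ((1 - 1/p)^2) * hnf_zeta_term p s1 s2 (e i))
      sums (of_real ((1 - 1/p)^2) * infsum (hnf_zeta_term p s1 s2) (hnf_params p))"
    by (rule sums_mult[OF hnf_zeta_term_enumeration(1)[OF p1 s bij]])
  ultimately show "integral\<^sup>L (Zp3_haar p) (integrand p s1 s2)
      = of_real ((1 - 1/p)^2) * infsum (hnf_zeta_term p s1 s2) (hnf_params p)"
    by (rule sums_unique2)
qed

theorem proposition4:
  fixes p :: nat
  assumes "prime p"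
  shows "\<exists>C::real. \<forall>s1 s2 :: complex. Re s1 > C \<and> Re s2 > C \<longrightarrow>
     integrable (Zp3_haar p) (integrand p s1 s2) \<and>
     ((\<lambda>S. zeta_term S s1 s2) has_sum
        (complex_of_real (inverse ((1 - 1 / real p)^2)) * integral\<^sup>L (Zp3_haar p) (integrand p s1 s2)))
       (p_subrings p)"
proof (intro exI[of _ 2] allI impI conjI)
  fix s1 s2 :: complex
  assume "Re s1 > 2 \<and> Re s2 > 2"
  then have s: "Re s1 \<ge> 2" "Re s2 \<ge> 2" by auto
  show "integrable (Zp3_haar p) (integrand p s1 s2)" by (rule integral_integrand(1)[OF assms s])
  have "(1 - 1 / real p)^2 \<noteq> 0" using prime_gt_1_nat[OF assms] by simp
  then have "complex_of_real (inverse ((1 - 1 / real p)^2)) * integral\<^sup>L (Zp3_haar p) (integrand p s1 s2)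
      = infsum (hnf_zeta_term p s1 s2) (hnf_params p)"
    by (simp add: integral_integrand(2)[OF assms s] of_real_inverse)
  then show "((\<lambda>S. zeta_term S s1 s2) has_sum
      (complex_of_real (inverse ((1 - 1 / real p)^2)) * integral\<^sup>L (Zp3_haar p) (integrand p s1 s2)))
      (p_subrings p)"
    using has_sum_zeta_term_p_subrings[OF assms s] by simp
qed

end
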